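(* Let $k$ be an unramified non-archimedean local field of residue characteristic $2$ (so $e=1$ and we take $\varpi=2$). Let $B(x)=x_1^2-a(x_2^2-\Delta x_3^2)$ on $k^3$, where $a=1+2u$ and $\Delta$ are units with quadratic defect $2\mathfrak o$, the Hilbert symbol $(a,\Delta)=-1$, $-a\Delta=1+2v$, and $u,v$ are units. Let $z=q^{-\beta}$, $w=zq^{-1}$, and $t\in\mathfrak o\setminus\{0\}$ with $|t|=q^{-T}$. Then \[ X^B(\beta;t^2)=|2|\,\frac{1+wq^{-1}}{1-w^2q^{-1}}+|2|\,w^{2T+1}q^{-T}\,\frac{1-w^2q^{-2}}{(1-w)(1-w^2q^{-1})}. \]
   Context: $k$ has ring of integers $\mathfrak o$, residue field of cardinality $q$, absolute value normalized by $|2|=q^{-1}$. On $\mathfrak o^n$ use the additive Haar measure of total mass $1$. For a quadratic form $B$ on $k^n$, $\rho\in\mathfrak o$ and integer $\ell\ge0$: $X_\ell^B(\rho)=\operatorname{meas}\{x\in\mathfrak o^n: B(x)-\rho\in 2^{\ell+1}\mathfrak o\}$ and $X^B(\beta;\rho)=\sum_{\ell\ge0}z^\ell X_\ell^B(\rho)$ with $z=q^{-\beta}$. The quadratic defect of $\rho\in k$ is the intersection of all ideals $b\mathfrak o$ over those $b\in k$ for which $\rho-b$ is a square in $k$. $(\cdot,\cdot)$ is the Hilbert symbol of $k$. *)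

theory Defs
  imports "HOL-Analysis.Analysis"
begin

text \<open>A non-archimedean field k is given by a type 'k of class field together with a
  discrete valuation val :: 'k => int (the value at 0 is irrelevant / unused).\<close>

definition vring :: "('k::field \<Rightarrow> int) \<Rightarrow> 'k set" where
  "vring val = {x. x = 0 \<or> 0 \<le> val x}"

definition two_pow_ideal :: "('k::field \<Rightarrow> int) \<Rightarrow> nat \<Rightarrow> 'k set" where
  "two_pow_ideal val m = {(2::'k) ^ m * y | y. y \<in> vring val}"

definition is_unit_v :: "('k::field \<Rightarrow> int) \<Rightarrow> 'k \<Rightarrow> bool" where
  "is_unit_v val x \<longleftrightarrow> x \<noteq> 0 \<and> val x = 0"

text \<open>Unramified non-archimedean local field of residue characteristic 2, with
  uniformizer 2 and residue field of cardinality q: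
  val is a discrete valuation, val 2 = 1, k is complete, and o/2o is finite of cardinality q.\<close>
definition unram_dyadic_local_field :: "('k::field \<Rightarrow> int) \<Rightarrow> nat \<Rightarrow> bool" where
  "unram_dyadic_local_field val q \<longleftrightarrow>
     (\<forall>x y. x \<noteq> 0 \<longrightarrow> y \<noteq> 0 \<longrightarrow> val (x * y) = val x + val y) \<and>
     (\<forall>x y. x \<noteq> 0 \<longrightarrow> y \<noteq> 0 \<longrightarrow> x + y \<noteq> 0 \<longrightarrow> min (val x) (val y) \<le> val (x + y)) \<and>
     (2::'k) \<noteq> 0 \<and> val 2 = 1 \<and>
     (\<forall>s::nat \<Rightarrow> 'k.
        (\<forall>N::int. \<exists>M. \<forall>m\<ge>M. \<forall>n\<ge>M. s m = s n \<or> N \<le> val (s m - s n)) \<longrightarrow>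
        (\<exists>L. \<forall>N::int. \<exists>M. \<forall>n\<ge>M. s n = L \<or> N \<le> val (s n - L))) \<and>
     finite (vring val // {(x, y). x \<in> vring val \<and> y \<in> vring val \<and> x - y \<in> two_pow_ideal val 1}) \<and>
     card (vring val // {(x, y). x \<in> vring val \<and> y \<in> vring val \<and> x - y \<in> two_pow_ideal val 1}) = q"

text \<open>o^n, with vectors as functions nat => 'k vanishing outside {0..<n}.\<close>
definition vecs :: "('k::field \<Rightarrow> int) \<Rightarrow> nat \<Rightarrow> (nat \<Rightarrow> 'k) set" where
  "vecs val n = {x. (\<forall>i<n. x i \<in> vring val) \<and> (\<forall>i\<ge>n. x i = 0)}"

definition vec_cong :: "('k::field \<Rightarrow> int) \<Rightarrow> nat \<Rightarrow> nat \<Rightarrow> ((nat \<Rightarrow> 'k) \<times> (nat \<Rightarrow> 'k)) set" where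
  "vec_cong val n m = {(x, y). x \<in> vecs val n \<and> y \<in> vecs val n \<and>
                          (\<forall>i<n. x i - y i \<in> two_pow_ideal val m)}"

text \<open>Haar measure (total mass 1 on o^n) of a set S \<subseteq> o^n which is a union of cosets
  of 2^m o^n: number of cosets in S divided by the number of cosets in o^n.\<close>
definition coset_measure :: "('k::field \<Rightarrow> int) \<Rightarrow> nat \<Rightarrow> nat \<Rightarrow> (nat \<Rightarrow> 'k) set \<Rightarrow> real" where
  "coset_measure val n m S = real (card (S // vec_cong val n m)) / real (card (vecs val n // vec_cong val n m))"

text \<open>X_l^B(rho) = meas {x in o^n : B(x) - rho in 2^(l+1) o}  (for B with integral
  coefficients this set is a union of cosets of 2^(l+1) o^n).\<close>
definition X_l :: "('k::field \<Rightarrow> int) \<Rightarrow> nat \<Rightarrow> ((nat \<Rightarrow> 'k) \<Rightarrow> 'k) \<Rightarrow> 'k \<Rightarrow> nat \<Rightarrow> real" where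
  "X_l val n B \<rho> l = coset_measure val n (l + 1)
      {x \<in> vecs val n. B x - \<rho> \<in> two_pow_ideal val (l + 1)}"

definition quad_defect :: "('k::field \<Rightarrow> int) \<Rightarrow> 'k \<Rightarrow> 'k set" where
  "quad_defect val \<rho> = (\<Inter>b \<in> {b. \<exists>c. \<rho> - b = c ^ 2}. {b * y | y. y \<in> vring val})"

definition hilbert_symbol :: "'k::field \<Rightarrow> 'k \<Rightarrow> int" where
  "hilbert_symbol a b = (if \<exists>x y z. (x, y, z) \<noteq> (0, 0, 0) \<and> z ^ 2 = a * x ^ 2 + b * y ^ 2
                          then 1 else -1)"

end

theory Submission
  imports Defs
begin

text \<open>Write \<open>N\<^sub>m(\<rho>)\<close> for the number of solutions of \<open>B(x) \<equiv> \<rho> (mod 2\<^sup>m)\<close> in \<open>(\<O>/2\<^sup>m\<O>)\<^sup>3\<close>,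
  so that \<open>X\<^sub>l(\<rho>) = N\<^sub>l\<^sub>+\<^sub>1(\<rho>) / q\<^bsup>3(l+1)\<^esup>\<close>. Since \<open>-a\<Delta> = 1 + 2v\<close>, the form is
  \<open>x\<^sub>0\<^sup>2 - (1 + 2u) x\<^sub>1\<^sup>2 - (1 + 2v) x\<^sub>2\<^sup>2\<close>, and it is anisotropic because \<open>(a, \<Delta>) = -1\<close>. With Hensel's
  lemma for square roots this implies that it has no zero modulo \<open>8\<close> with a unit coordinate, and
  that an associated binary form is anisotropic modulo \<open>2\<close>. Hence \<open>N\<^sub>1(\<rho>) = q\<^sup>2\<close> for all \<open>\<rho>\<close>;
  every solution of \<open>B \<equiv> 0 (mod 4)\<close> is divisible by \<open>2\<close>, which gives \<open>N\<^sub>2(4\<rho>) = q\<^sup>3\<close> and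
  \<open>N\<^sub>m\<^sub>+\<^sub>2(4\<rho>) = q\<^sup>3 N\<^sub>m(\<rho>)\<close>; for a unit \<open>t\<close> scaling reduces \<open>t\<^sup>2\<close> to \<open>1\<close>, the solutions of
  \<open>B \<equiv> 1 (mod 4)\<close> reduce to \<open>q + 1\<close> points of a conic over the residue field, and every further
  level multiplies the count by \<open>q\<^sup>2\<close> (Hensel lifting). Summing the resulting geometric series
  and inducting on \<open>T = val t\<close> gives the closed form.\<close>

section \<open>Valuation ring and the ideals \<open>2\<^sup>m \<O>\<close>\<close>

locale dyadic_field =
  fixes val :: "'k::field \<Rightarrow> int" and q :: nat
  assumes local_field: "unram_dyadic_local_field val q"
begin

abbreviation "\<O> \<equiv> vring val"
abbreviation "\<I> \<equiv> two_pow_ideal val"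

lemma val_mult: "x \<noteq> 0 \<Longrightarrow> y \<noteq> 0 \<Longrightarrow> val (x * y) = val x + val y"
  using local_field unfolding unram_dyadic_local_field_def by blast

lemma val_add_ge_min: "x \<noteq> 0 \<Longrightarrow> y \<noteq> 0 \<Longrightarrow> x + y \<noteq> 0 \<Longrightarrow> min (val x) (val y) \<le> val (x + y)"
  using local_field unfolding unram_dyadic_local_field_def by blast

lemma two_neq_zero: "(2::'k) \<noteq> 0" and val_two: "val 2 = 1"
  using local_field unfolding unram_dyadic_local_field_def by blast+

lemma cauchy_has_limit:
  fixes s :: "nat \<Rightarrow> 'k"
  assumes "\<forall>N::int. \<exists>M. \<forall>m\<ge>M. \<forall>n\<ge>M. s m = s n \<or> N \<le> val (s m - s n)"
  shows "\<exists>L. \<forall>N::int. \<exists>M. \<forall>n\<ge>M. s n = L \<or> N \<le> val (s n - L)"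
  using local_field assms unfolding unram_dyadic_local_field_def by blast

lemma finite_residues: "finite (\<O> // {(x, y). x \<in> \<O> \<and> y \<in> \<O> \<and> x - y \<in> \<I> 1})"
  and card_residues: "card (\<O> // {(x, y). x \<in> \<O> \<and> y \<in> \<O> \<and> x - y \<in> \<I> 1}) = q"
  using local_field unfolding unram_dyadic_local_field_def by blast+

lemma val_one: "val 1 = 0"
  using val_mult[of 1 1] by simp

lemma val_minus: "val (- x) = val x"
proof (cases "x = 0")
  case False
  have "val (-1 :: 'k) = 0"
    using val_mult[of "-1" "-1"] val_one by simp
  then show ?thesis
    using False val_mult[of "-1" x] by simp
qed simp

lemma val_power: "x \<noteq> 0 \<Longrightarrow> val (x ^ n) = int n * val x"
  by (induction n) (auto simp: val_mult val_one algebra_simps)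

lemma val_two_power: "val ((2::'k) ^ n) = int n"
  using val_power[OF two_neq_zero] val_two by simp

lemma val_inverse: "x \<noteq> 0 \<Longrightarrow> val (inverse x) = - val x"
  using val_mult[of x "inverse x"] val_one by simp

lemma val_divide: "x \<noteq> 0 \<Longrightarrow> y \<noteq> 0 \<Longrightarrow> val (x / y) = val x - val y"
  by (simp add: divide_inverse val_mult val_inverse)

lemma mem_vring_iff: "x \<in> \<O> \<longleftrightarrow> x = 0 \<or> 0 \<le> val x"
  by (simp add: vring_def)

lemma mem_ideal_two_power_iff: "x \<in> \<I> m \<longleftrightarrow> (\<exists>d\<in>\<O>. x = 2 ^ m * d)"
  unfolding two_pow_ideal_def by auto

lemma mem_ideal_iff: "x \<in> \<I> m \<longleftrightarrow> x = 0 \<or> int m \<le> val x"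
proof
  assume "x \<in> \<I> m"
  then obtain d where d: "d \<in> \<O>" "x = 2 ^ m * d"
    by (auto simp: mem_ideal_two_power_iff)
  then show "x = 0 \<or> int m \<le> val x"
    using two_neq_zero by (cases "d = 0") (auto simp: val_mult val_two_power mem_vring_iff)
next
  assume x: "x = 0 \<or> int m \<le> val x"
  have "x / 2 ^ m \<in> \<O>"
    using x two_neq_zero by (cases "x = 0") (auto simp: mem_vring_iff val_divide val_two_power)
  moreover have "x = 2 ^ m * (x / 2 ^ m)"
    using two_neq_zero by simp
  ultimately show "x \<in> \<I> m"
    unfolding mem_ideal_two_power_iff by blast
qed

lemma vring_eq_ideal_0: "\<O> = \<I> 0"
  by (auto simp: mem_vring_iff mem_ideal_iff)

lemma ideal_zero [simp]: "0 \<in> \<I> m"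
  by (simp add: mem_ideal_iff)

lemma ideal_add [intro]:
  assumes "x \<in> \<I> m" "y \<in> \<I> m"
  shows "x + y \<in> \<I> m"
proof (cases "x = 0 \<or> y = 0 \<or> x + y = 0")
  case False
  then have "min (val x) (val y) \<le> val (x + y)"
    using val_add_ge_min by blast
  then show ?thesis
    using assms False by (auto simp: mem_ideal_iff)
qed (use assms in auto)

lemma ideal_minus_iff [simp]: "- x \<in> \<I> m \<longleftrightarrow> x \<in> \<I> m"
  by (simp add: mem_ideal_iff val_minus)

lemma ideal_diff [intro]: "x \<in> \<I> m \<Longrightarrow> y \<in> \<I> m \<Longrightarrow> x - y \<in> \<I> m"
  using ideal_add[of x m "- y"] by simp

lemma ideal_mult [intro]: "x \<in> \<I> m \<Longrightarrow> y \<in> \<I> n \<Longrightarrow> x * y \<in> \<I> (m + n)"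
  by (cases "x = 0"; cases "y = 0") (auto simp: mem_ideal_iff val_mult)

lemma ideal_antimono: "n \<le> m \<Longrightarrow> x \<in> \<I> m \<Longrightarrow> x \<in> \<I> n"
  by (auto simp: mem_ideal_iff)

lemma ideal_mult_vring [simp, intro]: "x \<in> \<I> m \<Longrightarrow> y \<in> \<O> \<Longrightarrow> x * y \<in> \<I> m"
  using ideal_mult[of x m y 0] by (simp add: vring_eq_ideal_0)

lemma vring_mult_ideal [simp, intro]: "y \<in> \<O> \<Longrightarrow> x \<in> \<I> m \<Longrightarrow> y * x \<in> \<I> m"
  using ideal_mult_vring[of x m y] by (simp add: mult.commute)

lemma ideal_sym: "a - b \<in> \<I> m \<Longrightarrow> b - a \<in> \<I> m"
  using ideal_minus_iff[of "a - b" m] by simp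

lemma ideal_trans: "a - b \<in> \<I> m \<Longrightarrow> b - c \<in> \<I> m \<Longrightarrow> a - c \<in> \<I> m"
  using ideal_add[of "a - b" m "b - c"] by simp

lemma ideal_cong_iff: "x - y \<in> \<I> m \<Longrightarrow> x \<in> \<I> m \<longleftrightarrow> y \<in> \<I> m"
  using ideal_diff[of x m "x - y"] ideal_add[of y m "x - y"] by auto

lemma ideal_cong_diff_iff: "x - y \<in> \<I> m \<Longrightarrow> x - \<rho> \<in> \<I> m \<longleftrightarrow> y - \<rho> \<in> \<I> m"
  by (rule ideal_cong_iff) simp

lemma vring_add [simp, intro]: "x \<in> \<O> \<Longrightarrow> y \<in> \<O> \<Longrightarrow> x + y \<in> \<O>"
  and vring_diff [simp, intro]: "x \<in> \<O> \<Longrightarrow> y \<in> \<O> \<Longrightarrow> x - y \<in> \<O>"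
  and vring_minus_iff [simp]: "- x \<in> \<O> \<longleftrightarrow> x \<in> \<O>"
  and vring_mult [simp, intro]: "x \<in> \<O> \<Longrightarrow> y \<in> \<O> \<Longrightarrow> x * y \<in> \<O>"
  unfolding vring_eq_ideal_0 using ideal_mult[of x 0 y 0] by auto

lemma vring_zero [simp]: "0 \<in> \<O>" and vring_one [simp]: "1 \<in> \<O>"
  by (simp_all add: mem_vring_iff val_one)

lemma vring_power [simp, intro]: "x \<in> \<O> \<Longrightarrow> x ^ n \<in> \<O>"
  by (induction n) auto

lemma vring_of_nat [simp]: "of_nat n \<in> \<O>"
  by (induction n) auto

lemma vring_numeral [simp]: "numeral n \<in> \<O>"
  using vring_of_nat[of "numeral n"] by simp

lemma ideal_subset_vring: "x \<in> \<I> m \<Longrightarrow> x \<in> \<O>"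
  using ideal_antimono[of 0 m x] by (simp add: vring_eq_ideal_0)

lemma two_power_mult_in_ideal [simp, intro]: "y \<in> \<O> \<Longrightarrow> 2 ^ m * y \<in> \<I> m"
  by (auto simp: mem_ideal_two_power_iff)

lemma two_mult_in_ideal: "y \<in> \<O> \<Longrightarrow> 2 * y \<in> \<I> 1"
  and four_mult_in_ideal: "y \<in> \<O> \<Longrightarrow> 4 * y \<in> \<I> 2"
  using two_power_mult_in_ideal[of y 1] two_power_mult_in_ideal[of y 2] by simp_all

lemma two_in_ideal [simp]: "2 \<in> \<I> 1"
  using two_mult_in_ideal[of 1] by simp

lemma two_power_mult_ideal_iff: "(2::'k) ^ j * y \<in> \<I> (j + k) \<longleftrightarrow> y \<in> \<I> k"
  using two_neq_zero by (cases "y = 0") (auto simp: mem_ideal_iff val_mult val_two_power)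

lemma four_mult_ideal_iff: "4 * y \<in> \<I> (Suc (Suc k)) \<longleftrightarrow> y \<in> \<I> k"
  using two_power_mult_ideal_iff[of 2 y k] by simp

lemma one_notin_ideal [simp]: "0 < m \<Longrightarrow> (1::'k) \<notin> \<I> m"
  by (simp add: mem_ideal_iff val_one)

lemma square_in_ideal_1_imp: "x * x \<in> \<I> 1 \<Longrightarrow> x \<in> \<I> 1"
  by (cases "x = 0") (auto simp: mem_ideal_iff val_mult)

lemma ideal_all_imp_zero:
  assumes "\<And>m. x \<in> \<I> m"
  shows "x = 0"
proof (rule ccontr)
  assume "x \<noteq> 0"
  then have "0 \<le> val x" and "int (nat (val x + 1)) \<le> val x"
    using assms[of 0] assms[of "nat (val x + 1)"] by (simp_all add: mem_ideal_iff)
  then show False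
    by (simp split: if_splits)
qed

lemma is_unit_v_iff: "is_unit_v val x \<longleftrightarrow> x \<in> \<O> \<and> x \<notin> \<I> 1"
  by (auto simp: is_unit_v_def mem_vring_iff mem_ideal_iff)

lemma is_unit_v_in_vring: "is_unit_v val x \<Longrightarrow> x \<in> \<O>"
  by (simp add: is_unit_v_iff)

lemma is_unit_v_inverse: "is_unit_v val x \<Longrightarrow> is_unit_v val (inverse x)"
  and is_unit_v_mult: "is_unit_v val x \<Longrightarrow> is_unit_v val y \<Longrightarrow> is_unit_v val (x * y)"
  and is_unit_v_minus: "is_unit_v val x \<Longrightarrow> is_unit_v val (- x)"
  and is_unit_v_one [simp]: "is_unit_v val 1"
  by (simp_all add: is_unit_v_def val_inverse val_mult val_minus val_one)

lemma is_unit_v_mult_ideal_iff: "is_unit_v val x \<Longrightarrow> x * y \<in> \<I> m \<longleftrightarrow> y \<in> \<I> m"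
  by (cases "y = 0") (auto simp: is_unit_v_def mem_ideal_iff val_mult)

lemma is_unit_v_divide: "is_unit_v val x \<Longrightarrow> y \<in> \<O> \<Longrightarrow> y / x \<in> \<O>"
  using is_unit_v_inverse[of x] by (simp add: divide_inverse is_unit_v_iff)

lemma is_unit_v_cong: "is_unit_v val x \<Longrightarrow> y \<in> \<O> \<Longrightarrow> y - x \<in> \<I> 1 \<Longrightarrow> is_unit_v val y"
  using ideal_cong_iff[of y x 1] by (auto simp: is_unit_v_iff)

lemma is_unit_v_one_plus_two: "x \<in> \<O> \<Longrightarrow> is_unit_v val (1 + 2 * x)"
  by (rule is_unit_v_cong[OF is_unit_v_one]) (use two_mult_in_ideal[of x] in auto)

end

section \<open>Counting residue classes\<close>

lemma card_transversal_bij: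
  fixes A :: "'a set" and E :: "'a \<Rightarrow> 'a \<Rightarrow> bool"
  assumes sym: "\<And>x y. x \<in> A \<Longrightarrow> y \<in> A \<Longrightarrow> E x y \<Longrightarrow> E y x"
    and trans: "\<And>x y z. x \<in> A \<Longrightarrow> y \<in> A \<Longrightarrow> z \<in> A \<Longrightarrow> E x y \<Longrightarrow> E y z \<Longrightarrow> E x z"
    and D: "D \<subseteq> A" "\<And>x. x \<in> A \<Longrightarrow> \<exists>d\<in>D. E x d" "\<And>d d'. d \<in> D \<Longrightarrow> d' \<in> D \<Longrightarrow> E d d' \<Longrightarrow> d = d'"
    and D': "D' \<subseteq> A" "\<And>x. x \<in> A \<Longrightarrow> \<exists>d\<in>D'. E x d" "\<And>d d'. d \<in> D' \<Longrightarrow> d' \<in> D' \<Longrightarrow> E d d' \<Longrightarrow> d = d'"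
    and f: "\<And>x. x \<in> A \<Longrightarrow> f x \<in> A" "\<And>x y. x \<in> A \<Longrightarrow> y \<in> A \<Longrightarrow> E x y \<Longrightarrow> E (f x) (f y)"
    and h: "\<And>x. x \<in> A \<Longrightarrow> h x \<in> A" "\<And>x y. x \<in> A \<Longrightarrow> y \<in> A \<Longrightarrow> E x y \<Longrightarrow> E (h x) (h y)"
    and inverse: "\<And>x. x \<in> A \<Longrightarrow> h (f x) = x" "\<And>x. x \<in> A \<Longrightarrow> f (h x) = x"
    and P: "\<And>x y. x \<in> A \<Longrightarrow> y \<in> A \<Longrightarrow> E x y \<Longrightarrow> P x = P y"
  shows "card {x\<in>D. P (f x)} = card {y\<in>D'. P y}"
proof -
  define g where "g x = (SOME d. d \<in> D' \<and> E (f x) d)" for x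
  have g: "g x \<in> D' \<and> E (f x) (g x)" if "x \<in> A" for x
    unfolding g_def by (rule someI_ex) (use D'(2) f(1) that in blast)
  have "bij_betw g {x\<in>D. P (f x)} {y\<in>D'. P y}"
  proof (rule bij_betwI')
    fix x y assume x: "x \<in> {x\<in>D. P (f x)}" and y: "y \<in> {x\<in>D. P (f x)}"
    have xA: "x \<in> A" and yA: "y \<in> A" using x y D(1) by auto
    show "g x = g y \<longleftrightarrow> x = y"
    proof
      assume gxy: "g x = g y"
      have "E (f x) (g y)"
        using g[OF xA] gxy by simp
      moreover have "E (f y) (g y)" "g y \<in> A"
        using g[OF yA] D'(1) by auto
      ultimately
      have "E (f x) (f y)"
        using trans[OF f(1)[OF xA] _ f(1)[OF yA] _ sym] f(1) xA yA by blast
      then have "E (h (f x)) (h (f y))" using h(2) f(1) xA yA by blast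
      then show "x = y" using inverse(1) xA yA D(3) x y by auto
    qed simp
  next
    fix x assume x: "x \<in> {x\<in>D. P (f x)}"
    then have "x \<in> A" using D(1) by auto
    then show "g x \<in> {y\<in>D'. P y}"
      using x g P f(1) D'(1) by blast
  next
    fix y assume y: "y \<in> {y\<in>D'. P y}"
    then have yA: "y \<in> A" using D'(1) by auto
    obtain x where x: "x \<in> D" "E (h y) x" using D(2) h(1) yA by blast
    have xA: "x \<in> A" using x D(1) by auto
    have "E y (f x)" using f(2)[OF h(1)[OF yA] xA x(2)] inverse(2)[OF yA] by simp
    moreover have "y = g x"
      using D'(3) y g[OF xA] trans[OF yA f(1)[OF xA] _ calculation] D'(1) by blast
    ultimately show "\<exists>x\<in>{x\<in>D. P (f x)}. y = g x"
      using x y P[OF yA f(1)[OF xA]] by auto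
  qed
  then show ?thesis
    by (rule bij_betw_same_card)
qed

lemma card_quotient_transversal:
  assumes eq: "equiv A r" and D: "D \<subseteq> A"
    and ex: "\<And>x. x \<in> A \<Longrightarrow> \<exists>d\<in>D. (x, d) \<in> r"
    and unique: "\<And>d d'. d \<in> D \<Longrightarrow> d' \<in> D \<Longrightarrow> (d, d') \<in> r \<Longrightarrow> d = d'"
    and S: "S \<subseteq> A" "\<And>x y. x \<in> S \<Longrightarrow> (x, y) \<in> r \<Longrightarrow> y \<in> S"
  shows "card (S // r) = card (S \<inter> D)"
proof -
  have inj: "inj_on (\<lambda>d. r `` {d}) (S \<inter> D)"
  proof (rule inj_onI)
    fix d d' assume d: "d \<in> S \<inter> D" and d': "d' \<in> S \<inter> D" and "r `` {d} = r `` {d'}"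
    moreover have "(d', d') \<in> r" using d' D eq by (auto simp: equiv_def refl_on_def)
    ultimately show "d = d'" using unique by blast
  qed
  moreover have image: "(\<lambda>d. r `` {d}) ` (S \<inter> D) = S // r"
  proof
    show "S // r \<subseteq> (\<lambda>d. r `` {d}) ` (S \<inter> D)"
    proof
      fix C assume "C \<in> S // r"
      then obtain x where x: "x \<in> S" "C = r `` {x}" unfolding quotient_def by blast
      then obtain d where d: "d \<in> D" "(x, d) \<in> r" using ex S(1) by blast
      then have "d \<in> S" and "C = r `` {d}" using S(2) x equiv_class_eq[OF eq d(2)] by auto
      then show "C \<in> (\<lambda>d. r `` {d}) ` (S \<inter> D)" using d by blast
    qed
  qed (unfold quotient_def, blast)
  show ?thesis
    using card_image[OF inj] image by simp
qed

lemma card_filter_involution: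
  assumes "\<And>x. x \<in> A \<Longrightarrow> \<sigma> x \<in> A" and "\<And>x. \<sigma> (\<sigma> x) = x"
  shows "card {x\<in>A. P (\<sigma> x)} = card {x\<in>A. P x}"
  by (rule bij_betw_same_card[of \<sigma>], rule bij_betwI[where g = \<sigma>]) (use assms in auto)

context dyadic_field
begin

definition residue_system :: "nat \<Rightarrow> 'k set \<Rightarrow> bool" where
  "residue_system m S \<longleftrightarrow> S \<subseteq> \<O> \<and> (\<forall>x\<in>\<O>. \<exists>r\<in>S. x - r \<in> \<I> m) \<and>
     (\<forall>r\<in>S. \<forall>r'\<in>S. r - r' \<in> \<I> m \<longrightarrow> r = r')"

lemma residue_systemD:
  assumes "residue_system m S"
  shows "S \<subseteq> \<O>" "x \<in> \<O> \<Longrightarrow> \<exists>r\<in>S. x - r \<in> \<I> m"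
    "r \<in> S \<Longrightarrow> r' \<in> S \<Longrightarrow> r - r' \<in> \<I> m \<Longrightarrow> r = r'"
  using assms unfolding residue_system_def by blast+

definition residue_rel :: "('k \<times> 'k) set" where
  "residue_rel = {(x, y). x \<in> \<O> \<and> y \<in> \<O> \<and> x - y \<in> \<I> 1}"

lemma equiv_residue_rel: "equiv \<O> residue_rel"
proof (rule equivI)
  show "sym residue_rel"
    unfolding sym_def residue_rel_def using ideal_sym by blast
  show "trans residue_rel"
    unfolding trans_def residue_rel_def using ideal_trans by blast
qed (auto simp: residue_rel_def refl_on_def)

text \<open>Digits are representatives of \<open>\<O>/2\<O>\<close>, chosen so that \<open>0\<close> and \<open>1\<close> are among them.\<close>

definition class_rep :: "'k set \<Rightarrow> 'k" where
  "class_rep C = (if 0 \<in> C then 0 else if 1 \<in> C then 1 else SOME x. x \<in> C)"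

definition digits :: "'k set" where
  "digits = class_rep ` (\<O> // residue_rel)"

lemma class_rep_in: "C \<in> \<O> // residue_rel \<Longrightarrow> class_rep C \<in> C"
  using in_quotient_imp_non_empty[OF equiv_residue_rel] unfolding class_rep_def
  by (auto simp: some_in_eq)

lemma residue_rel_class_rep:
  assumes "x \<in> \<O>"
  shows "class_rep (residue_rel `` {x}) \<in> digits" "x - class_rep (residue_rel `` {x}) \<in> \<I> 1"
proof -
  have C: "residue_rel `` {x} \<in> \<O> // residue_rel"
    using assms by (rule quotientI)
  then show "class_rep (residue_rel `` {x}) \<in> digits"
    by (simp add: digits_def)
  define c where "c = class_rep (residue_rel `` {x})"
  have "(x, c) \<in> residue_rel"
    using class_rep_in[OF C] unfolding c_def by blast
  then show "x - class_rep (residue_rel `` {x}) \<in> \<I> 1"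
    unfolding c_def[symmetric] by (simp add: residue_rel_def)
qed

lemma residue_system_digits: "residue_system 1 digits"
  unfolding residue_system_def
proof (intro conjI ballI impI)
  show "digits \<subseteq> \<O>"
    using class_rep_in in_quotient_imp_subset[OF equiv_residue_rel] by (auto simp: digits_def)
  show "\<exists>r\<in>digits. x - r \<in> \<I> 1" if "x \<in> \<O>" for x
    using residue_rel_class_rep[OF that] by blast
  fix r r' assume "r \<in> digits" "r' \<in> digits" and rr': "r - r' \<in> \<I> 1"
  then obtain C C' where C: "C \<in> \<O> // residue_rel" "r = class_rep C"
    and C': "C' \<in> \<O> // residue_rel" "r' = class_rep C'"
    unfolding digits_def by blast
  have "r \<in> C" "r' \<in> C'"
    using C C' class_rep_in by auto
  moreover have "(r, r') \<in> residue_rel"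
    using calculation C(1) C'(1) rr' by (auto simp: quotient_def residue_rel_def)
  ultimately have "C = C'"
    by (rule quotient_eqI[OF equiv_residue_rel C(1) C'(1)])
  then show "r = r'" using C C' by simp
qed

lemmas digits_subset_vring = residue_systemD(1)[OF residue_system_digits]
  and digits_exists = residue_systemD(2)[OF residue_system_digits]
  and digits_unique = residue_systemD(3)[OF residue_system_digits]

lemma digit_in_vring: "r \<in> digits \<Longrightarrow> r \<in> \<O>"
  using digits_subset_vring by blast

lemma zero_in_digits: "0 \<in> digits" and one_in_digits: "1 \<in> digits"
proof -
  have "0 \<in> residue_rel `` {0}" "0 \<notin> residue_rel `` {1}" "1 \<in> residue_rel `` {1}"
    by (simp_all add: residue_rel_def)
  then have "class_rep (residue_rel `` {0}) = 0" "class_rep (residue_rel `` {1}) = 1"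
    by (simp_all add: class_rep_def)
  then show "0 \<in> digits" "1 \<in> digits"
    using residue_rel_class_rep(1)[of 0] residue_rel_class_rep(1)[of 1] by simp_all
qed

lemma digit_in_ideal_iff: "r \<in> digits \<Longrightarrow> r \<in> \<I> 1 \<longleftrightarrow> r = 0"
  using digits_unique[of r 0] zero_in_digits by auto

lemma finite_digits: "finite digits" and card_digits: "card digits = q"
proof -
  have "inj_on class_rep (\<O> // residue_rel)"
  proof (rule inj_onI)
    fix C C' assume C: "C \<in> \<O> // residue_rel" and C': "C' \<in> \<O> // residue_rel"
      and "class_rep C = class_rep C'"
    then have "class_rep C \<in> C \<inter> C'"
      using class_rep_in[OF C] class_rep_in[OF C'] by simp
    then show "C = C'"
      using quotient_disj[OF equiv_residue_rel C C'] by blast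
  qed
  moreover have "finite (\<O> // residue_rel)" "card (\<O> // residue_rel) = q"
    using finite_residues card_residues unfolding residue_rel_def by simp_all
  ultimately show "finite digits" "card digits = q"
    unfolding digits_def by (simp_all add: card_image)
qed

lemma two_le_q: "2 \<le> q"
proof -
  have "card {0, 1::'k} \<le> card digits"
    using zero_in_digits one_in_digits finite_digits by (intro card_mono) auto
  then show ?thesis
    using card_digits by simp
qed

definition digit_of :: "'k \<Rightarrow> 'k" where
  "digit_of x = (THE r. r \<in> digits \<and> x - r \<in> \<I> 1)"

lemma digit_of: "x \<in> \<O> \<Longrightarrow> digit_of x \<in> digits \<and> x - digit_of x \<in> \<I> 1"
  unfolding digit_of_def
proof (rule theI')
  assume "x \<in> \<O>"
  then obtain r where r: "r \<in> digits" "x - r \<in> \<I> 1" using digits_exists by blast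
  have "r' = r" if "r' \<in> digits" "x - r' \<in> \<I> 1" for r'
    using digits_unique[OF that(1) r(1)] ideal_trans[OF ideal_sym[OF that(2)] r(2)] by blast
  then show "\<exists>!r. r \<in> digits \<and> x - r \<in> \<I> 1" using r by blast
qed

definition shift_sum :: "nat \<Rightarrow> 'k set \<Rightarrow> 'k set \<Rightarrow> 'k set" where
  "shift_sum j S T = (\<lambda>(s, t). s + 2 ^ j * t) ` (S \<times> T)"

lemma shift_sum_inj:
  assumes S: "residue_system j S" and T: "T \<subseteq> \<O>"
  shows "inj_on (\<lambda>(s, t). s + 2 ^ j * t) (S \<times> T)"
proof (rule inj_onI, clarify)
  fix s t s' t' assume st: "s \<in> S" "t \<in> T" "s' \<in> S" "t' \<in> T"
    and e: "s + 2 ^ j * t = s' + 2 ^ j * (t' :: 'k)"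
  have "s - s' = 2 ^ j * (t' - t)" using e by (simp add: algebra_simps)
  moreover have "t' - t \<in> \<O>" using st T by auto
  ultimately have "s = s'" using residue_systemD(3)[OF S] st by simp
  then show "s = s' \<and> t = t'" using e two_neq_zero by simp
qed

lemma residue_system_shift_sum:
  assumes S: "residue_system j S" and T: "residue_system k T"
  shows "residue_system (j + k) (shift_sum j S T)"
  unfolding residue_system_def
proof (intro conjI ballI impI)
  show "shift_sum j S T \<subseteq> \<O>"
  proof
    fix x assume "x \<in> shift_sum j S T"
    then obtain s t where "s \<in> S" "t \<in> T" "x = s + 2 ^ j * t"
      by (auto simp: shift_sum_def)
    moreover have "s \<in> \<O>" "t \<in> \<O>"
      using calculation residue_systemD(1)[OF S] residue_systemD(1)[OF T] by auto
    ultimately show "x \<in> \<O>"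
      by simp
  qed
next
  fix x assume "x \<in> \<O>"
  then obtain s where s: "s \<in> S" "x - s \<in> \<I> j" using residue_systemD(2)[OF S] by blast
  then obtain y where y: "y \<in> \<O>" "x - s = 2 ^ j * y" by (auto simp: mem_ideal_two_power_iff)
  then obtain t where t: "t \<in> T" "y - t \<in> \<I> k" using residue_systemD(2)[OF T] by blast
  have "x - (s + 2 ^ j * t) = 2 ^ j * (y - t)" using y by (simp add: algebra_simps)
  then have "x - (s + 2 ^ j * t) \<in> \<I> (j + k)" using t two_power_mult_ideal_iff by simp
  then show "\<exists>r\<in>shift_sum j S T. x - r \<in> \<I> (j + k)"
    using s t by (auto simp: shift_sum_def)
next
  fix r r' assume "r \<in> shift_sum j S T" "r' \<in> shift_sum j S T" and d: "r - r' \<in> \<I> (j + k)"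
  then obtain s t s' t' where st: "s \<in> S" "t \<in> T" "r = s + 2 ^ j * t"
    and st': "s' \<in> S" "t' \<in> T" "r' = s' + 2 ^ j * t'"
    unfolding shift_sum_def by auto
  have tO: "t \<in> \<O>" "t' \<in> \<O>" using st st' residue_systemD(1)[OF T] by auto
  have "s - s' = (r - r') - 2 ^ j * (t - t')" using st st' by (simp add: algebra_simps)
  moreover have "r - r' \<in> \<I> j" "2 ^ j * (t - t') \<in> \<I> j"
    using d ideal_antimono[of j "j + k"] tO by auto
  then have "(r - r') - 2 ^ j * (t - t') \<in> \<I> j"
    by (rule ideal_diff)
  ultimately have "s - s' \<in> \<I> j"
    by (simp only:)
  then have "s = s'"
    by (rule residue_systemD(3)[OF S st(1) st'(1)])
  then have "2 ^ j * (t - t') \<in> \<I> (j + k)" using st st' d by (simp add: algebra_simps)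
  then have "t = t'" using residue_systemD(3)[OF T] st st' two_power_mult_ideal_iff by blast
  then show "r = r'" using \<open>s = s'\<close> st st' by simp
qed

text \<open>\<open>reps m\<close> consists of the base-2 expansions of length \<open>m\<close> with digits in \<open>digits\<close>.\<close>

fun reps :: "nat \<Rightarrow> 'k set" where
  "reps 0 = {0}"
| "reps (Suc m) = shift_sum 1 digits (reps m)"

lemma residue_system_reps: "residue_system m (reps m)"
proof (induction m)
  case 0
  show ?case by (auto simp: residue_system_def vring_eq_ideal_0)
next
  case (Suc m)
  then show ?case using residue_system_shift_sum[OF residue_system_digits] by simp
qed

lemmas reps_subset_vring = residue_systemD(1)[OF residue_system_reps]

lemma finite_reps: "finite (reps m)" and card_reps: "card (reps m) = q ^ m"
proof (induction m)
  case (Suc m)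
  have "card (reps (Suc m)) = card (digits \<times> reps m)"
    using card_image[OF shift_sum_inj[OF residue_system_digits reps_subset_vring]]
    by (simp add: shift_sum_def)
  then show "finite (reps (Suc m))" "card (reps (Suc m)) = q ^ Suc m"
    using Suc finite_digits card_digits by (simp_all add: shift_sum_def card_cartesian_product)
qed simp_all

lemma reps_1 [simp]: "reps 1 = digits"
  by (simp add: shift_sum_def image_def)

declare reps.simps(2) [simp del]

lemma reps_Suc_0 [simp]: "reps (Suc 0) = digits"
  using reps_1 by simp

definition cube :: "'k set \<Rightarrow> ('k \<times> 'k \<times> 'k) set" where
  "cube S = S \<times> S \<times> S"

lemma mem_cube [simp]: "(a, b, c) \<in> cube S \<longleftrightarrow> a \<in> S \<and> b \<in> S \<and> c \<in> S"
  by (simp add: cube_def)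

lemma finite_cube: "finite S \<Longrightarrow> finite (cube S)"
  and card_cube: "finite S \<Longrightarrow> card (cube S) = card S ^ 3"
  by (simp_all add: cube_def card_cartesian_product power3_eq_cube)

lemma finite_cube_reps: "finite (cube (reps m))"
  and card_cube_reps: "card (cube (reps m)) = q ^ (3 * m)"
  by (simp_all add: finite_cube card_cube finite_reps card_reps power_mult[symmetric] mult.commute)

lemma cube_reps_subset: "x \<in> cube (reps m) \<Longrightarrow> x \<in> cube \<O>"
  using reps_subset_vring by (cases x) auto

definition cong3 :: "nat \<Rightarrow> 'k \<times> 'k \<times> 'k \<Rightarrow> 'k \<times> 'k \<times> 'k \<Rightarrow> bool" where
  "cong3 m x y \<longleftrightarrow> (case (x, y) of ((a, b, c), (a', b', c')) \<Rightarrow>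
     a - a' \<in> \<I> m \<and> b - b' \<in> \<I> m \<and> c - c' \<in> \<I> m)"

lemma cong3_simp [simp]:
  "cong3 m (a, b, c) (a', b', c') \<longleftrightarrow> a - a' \<in> \<I> m \<and> b - b' \<in> \<I> m \<and> c - c' \<in> \<I> m"
  by (simp add: cong3_def)

lemma cong3_sym: "cong3 m x y \<Longrightarrow> cong3 m y x"
  by (cases x, cases y) (simp add: ideal_sym)

lemma cong3_trans: "cong3 m x y \<Longrightarrow> cong3 m y z \<Longrightarrow> cong3 m x z"
  by (cases x, cases y, cases z) (simp, blast intro: ideal_trans)

definition invariant_mod :: "nat \<Rightarrow> ('k \<times> 'k \<times> 'k \<Rightarrow> bool) \<Rightarrow> bool" where
  "invariant_mod m P \<longleftrightarrow> (\<forall>x\<in>cube \<O>. \<forall>y\<in>cube \<O>. cong3 m x y \<longrightarrow> P x = P y)"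

lemma invariant_modI:
  assumes "\<And>a b c a' b' c'. a \<in> \<O> \<Longrightarrow> b \<in> \<O> \<Longrightarrow> c \<in> \<O> \<Longrightarrow> a' \<in> \<O> \<Longrightarrow> b' \<in> \<O> \<Longrightarrow> c' \<in> \<O> \<Longrightarrow>
    a - a' \<in> \<I> m \<Longrightarrow> b - b' \<in> \<I> m \<Longrightarrow> c - c' \<in> \<I> m \<Longrightarrow> P (a, b, c) = P (a', b', c')"
  shows "invariant_mod m P"
  unfolding invariant_mod_def
proof (intro ballI impI)
  fix x y assume xy: "x \<in> cube \<O>" "y \<in> cube \<O>" "cong3 m x y"
  obtain a b c a' b' c' where "x = (a, b, c)" "y = (a', b', c')"
    by (cases x, cases y) auto
  then show "P x = P y"
    using xy by (simp only:) (rule assms; simp)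
qed

lemma invariant_modD:
  "invariant_mod m P \<Longrightarrow> x \<in> cube \<O> \<Longrightarrow> y \<in> cube \<O> \<Longrightarrow> cong3 m x y \<Longrightarrow> P x = P y"
  unfolding invariant_mod_def by blast

lemma invariant_mod_mono:
  assumes "invariant_mod j P" "j \<le> m"
  shows "invariant_mod m P"
  unfolding invariant_mod_def
proof (intro ballI impI)
  fix x y assume xy: "x \<in> cube \<O>" "y \<in> cube \<O>" and "cong3 m x y"
  then have "cong3 j x y"
    using ideal_antimono[OF assms(2)] by (cases x, cases y) simp
  then show "P x = P y"
    by (rule invariant_modD[OF assms(1) xy])
qed

definition count_mod :: "nat \<Rightarrow> ('k \<times> 'k \<times> 'k \<Rightarrow> bool) \<Rightarrow> nat" where
  "count_mod m P = card {x \<in> cube (reps m). P x}"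

lemma count_mod_transfer:
  assumes S: "residue_system m S" and S': "residue_system m S'"
    and f: "\<And>x. x \<in> cube \<O> \<Longrightarrow> f x \<in> cube \<O>"
      "\<And>x y. x \<in> cube \<O> \<Longrightarrow> y \<in> cube \<O> \<Longrightarrow> cong3 m x y \<Longrightarrow> cong3 m (f x) (f y)"
    and h: "\<And>x. x \<in> cube \<O> \<Longrightarrow> h x \<in> cube \<O>"
      "\<And>x y. x \<in> cube \<O> \<Longrightarrow> y \<in> cube \<O> \<Longrightarrow> cong3 m x y \<Longrightarrow> cong3 m (h x) (h y)"
    and inverse: "\<And>x. x \<in> cube \<O> \<Longrightarrow> h (f x) = x" "\<And>x. x \<in> cube \<O> \<Longrightarrow> f (h x) = x"
    and P: "invariant_mod m P"
  shows "card {x\<in>cube S. P (f x)} = card {y\<in>cube S'. P y}"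
proof -
  have exists: "\<exists>d\<in>cube T. cong3 m x d" if T: "residue_system m T" and x: "x \<in> cube \<O>" for T x
  proof -
    obtain a b c where abc: "x = (a, b, c)" "a \<in> \<O>" "b \<in> \<O>" "c \<in> \<O>"
      using x by (cases x) auto
    obtain a' b' c' where "a' \<in> T" "a - a' \<in> \<I> m" "b' \<in> T" "b - b' \<in> \<I> m"
      "c' \<in> T" "c - c' \<in> \<I> m"
      using residue_systemD(2)[OF T] abc(2-4) by metis
    then show ?thesis
      using abc(1) by (intro bexI[of _ "(a', b', c')"]) simp_all
  qed
  have unique: "d = d'" if T: "residue_system m T" and "d \<in> cube T" "d' \<in> cube T" "cong3 m d d'"
    for T d d'
    using that residue_systemD(3)[OF T] by (cases d, cases d') auto
  have subset: "cube T \<subseteq> cube \<O>" if "residue_system m T" for T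
    using residue_systemD(1)[OF that] by (auto simp: cube_def)
  show ?thesis
  proof (rule card_transversal_bij[where A = "cube \<O>" and E = "cong3 m"])
    show "cube S \<subseteq> cube \<O>" "cube S' \<subseteq> cube \<O>"
      using subset S S' by blast+
    show "\<exists>d\<in>cube S. cong3 m x d" "\<exists>d\<in>cube S'. cong3 m x d" if "x \<in> cube \<O>" for x
      using exists S S' that by blast+
    show "d = d'" if "d \<in> cube S" "d' \<in> cube S" "cong3 m d d'" for d d'
      using unique[OF S] that .
    show "d = d'" if "d \<in> cube S'" "d' \<in> cube S'" "cong3 m d d'" for d d'
      using unique[OF S'] that .
    show "cong3 m y x" if "cong3 m x y" for x y
      using that by (rule cong3_sym)
    show "cong3 m x z" if "cong3 m x y" "cong3 m y z" for x y z
      using that by (rule cong3_trans)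
    show "P x = P y" if "x \<in> cube \<O>" "y \<in> cube \<O>" "cong3 m x y" for x y
      using that by (rule invariant_modD[OF P])
  qed (fact f h inverse)+
qed

lemma count_mod_residue_system:
  assumes "residue_system m S" "invariant_mod m P"
  shows "card {x\<in>cube S. P x} = count_mod m P"
  using count_mod_transfer[OF assms(1) residue_system_reps, where f = id and h = id] assms(2)
  unfolding count_mod_def by simp

definition shift3 :: "nat \<Rightarrow> 'k \<times> 'k \<times> 'k \<Rightarrow> 'k \<times> 'k \<times> 'k \<Rightarrow> 'k \<times> 'k \<times> 'k" where
  "shift3 j s t = (case (s, t) of ((a, b, c), (a', b', c')) \<Rightarrow>
     (a + 2 ^ j * a', b + 2 ^ j * b', c + 2 ^ j * c'))"

lemma shift3_simp [simp]: "shift3 j (a, b, c) (a', b', c') = (a + 2 ^ j * a', b + 2 ^ j * b', c + 2 ^ j * c')"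
  by (simp add: shift3_def)

lemma cube_shift_sum:
  "cube (shift_sum j S T) = (\<lambda>(s, t). shift3 j s t) ` (cube S \<times> cube T)"
  by (auto simp: cube_def shift_sum_def image_iff) force+

lemma count_mod_decomp:
  assumes P: "invariant_mod (j + k) P"
  shows "count_mod (j + k) P = (\<Sum>s\<in>cube (reps j). card {t \<in> cube (reps k). P (shift3 j s t)})"
proof -
  let ?C = "shift_sum j (reps j) (reps k)"
  let ?g = "\<lambda>(s, t). shift3 j s t"
  have inj1: "inj_on (\<lambda>(s, t). s + 2 ^ j * t) (reps j \<times> reps k)"
    using shift_sum_inj[OF residue_system_reps reps_subset_vring] .
  have inj1': "s = s' \<and> t = t'" if "s \<in> reps j" "s' \<in> reps j" "t \<in> reps k" "t' \<in> reps k"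
    "s + 2 ^ j * t = s' + 2 ^ j * t'" for s s' t t'
    using inj_onD[OF inj1, of "(s, t)" "(s', t')"] that by auto
  have inj: "inj_on ?g (cube (reps j) \<times> cube (reps k))"
  proof (rule inj_onI)
    fix u v assume uv: "u \<in> cube (reps j) \<times> cube (reps k)" "v \<in> cube (reps j) \<times> cube (reps k)"
      and "?g u = ?g v"
    moreover obtain a b c a' b' c' x y z x' y' z'
      where "u = ((a, b, c), (a', b', c'))" "v = ((x, y, z), (x', y', z'))"
      by (metis prod.exhaust)
    ultimately show "u = v"
      using inj1'[of a x a' x'] inj1'[of b y b' y'] inj1'[of c z c' z'] by simp
  qed
  have "count_mod (j + k) P = card {x\<in>cube ?C. P x}"
    using count_mod_residue_system[OF residue_system_shift_sum[OF residue_system_reps residue_system_reps] P]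
    by simp
  also have "{x\<in>cube ?C. P x} = ?g ` {st \<in> cube (reps j) \<times> cube (reps k). P (?g st)}"
    unfolding cube_shift_sum by blast
  also have "card \<dots> = card (SIGMA s:cube (reps j). {t \<in> cube (reps k). P (shift3 j s t)})"
    by (subst card_image[OF inj_on_subset[OF inj]]) (auto intro!: arg_cong[where f = card])
  also have "\<dots> = (\<Sum>s\<in>cube (reps j). card {t \<in> cube (reps k). P (shift3 j s t)})"
    using finite_cube_reps by (intro card_SigmaI) auto
  finally show ?thesis .
qed

lemma count_mod_refine:
  assumes P: "invariant_mod j P"
  shows "count_mod (j + k) P = q ^ (3 * k) * count_mod j P"
proof -
  have shift_inv: "P (shift3 j s t) = P s" if "s \<in> cube (reps j)" "t \<in> cube (reps k)" for s t
  proof -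
    obtain a b c a' b' c' where st: "s = (a, b, c)" "t = (a', b', c')"
      by (cases s, cases t) auto
    then have "a \<in> \<O>" "b \<in> \<O>" "c \<in> \<O>" "a' \<in> \<O>" "b' \<in> \<O>" "c' \<in> \<O>"
      using that reps_subset_vring by auto
    then show ?thesis
      unfolding st by (intro invariant_modD[OF P]) simp_all
  qed
  have "card {t \<in> cube (reps k). P (shift3 j s t)} = (if P s then q ^ (3 * k) else 0)"
    if "s \<in> cube (reps j)" for s
  proof -
    have "{t \<in> cube (reps k). P (shift3 j s t)} = (if P s then cube (reps k) else {})"
      using shift_inv[OF that] by auto
    then show ?thesis
      by (simp add: card_cube_reps)
  qed
  then have "count_mod (j + k) P = (\<Sum>s\<in>cube (reps j). if P s then q ^ (3 * k) else 0)"
    using count_mod_decomp[OF invariant_mod_mono[OF P]] by simp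
  also have "\<dots> = q ^ (3 * k) * count_mod j P"
    by (simp add: sum.inter_filter[OF finite_cube_reps, symmetric] count_mod_def)
  finally show ?thesis .
qed

lemma card_cube_digits_unique:
  assumes unique: "\<And>b c. b \<in> digits \<Longrightarrow> c \<in> digits \<Longrightarrow> \<exists>!a. a \<in> digits \<and> P (a, b, c)"
  shows "card {x \<in> cube digits. P x} = q ^ 2"
proof -
  define g where "g b c = (THE a. a \<in> digits \<and> P (a, b, c))" for b c
  have g: "g b c \<in> digits \<and> P (g b c, b, c)" if "b \<in> digits" "c \<in> digits" for b c
    unfolding g_def using theI'[OF unique[OF that]] .
  have "bij_betw (\<lambda>(a, b, c). (b, c)) {x \<in> cube digits. P x} (digits \<times> digits)"
  proof (rule bij_betwI')
    fix x y assume "x \<in> {x \<in> cube digits. P x}" "y \<in> {x \<in> cube digits. P x}"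
    then show "((\<lambda>(a, b, c). (b, c)) x = (\<lambda>(a, b, c). (b, c)) y) = (x = y)"
      using unique by (cases x, cases y) auto
  next
    fix y assume "y \<in> digits \<times> digits"
    then show "\<exists>x\<in>{x \<in> cube digits. P x}. y = (\<lambda>(a, b, c). (b, c)) x"
      using g by (cases y) force
  qed auto
  then show ?thesis
    using bij_betw_same_card finite_digits card_digits
    by (fastforce simp: card_cartesian_product power2_eq_square)
qed

lemma card_cube_digits_unique_second:
  assumes "\<And>a c. a \<in> digits \<Longrightarrow> c \<in> digits \<Longrightarrow> \<exists>!b. b \<in> digits \<and> P (a, b, c)"
  shows "card {x \<in> cube digits. P x} = q ^ 2"
proof -
  have "card {x \<in> cube digits. P ((\<lambda>(a, b, c). (b, a, c)) x)} = q ^ 2"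
    using assms by (intro card_cube_digits_unique) simp
  then show ?thesis
    by (subst (asm) card_filter_involution) auto
qed

lemma card_cube_digits_unique_third:
  assumes "\<And>a b. a \<in> digits \<Longrightarrow> b \<in> digits \<Longrightarrow> \<exists>!c. c \<in> digits \<and> P (a, b, c)"
  shows "card {x \<in> cube digits. P x} = q ^ 2"
proof -
  have "card {x \<in> cube digits. P ((\<lambda>(a, b, c). (c, b, a)) x)} = q ^ 2"
    using assms by (intro card_cube_digits_unique) simp
  then show ?thesis
    by (subst (asm) card_filter_involution) auto
qed

section \<open>Square roots\<close>

lemma ideal_cauchy_limit:
  assumes step: "\<And>n. s (Suc n) - s n \<in> \<I> n"
  obtains L where "\<And>m. \<exists>M. \<forall>n\<ge>M. s n - L \<in> \<I> m"
proof -
  have close: "s n' - s n \<in> \<I> n" if "n \<le> n'" for n n'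
    using that
  proof (induction n' rule: dec_induct)
    case (step n')
    have "s (Suc n') - s n' \<in> \<I> n"
      using ideal_antimono[OF step.hyps(1)] assms by blast
    then have "(s (Suc n') - s n') + (s n' - s n) \<in> \<I> n"
      using step.IH by (rule ideal_add)
    then show ?case
      by simp
  qed simp
  have "\<forall>N::int. \<exists>M. \<forall>m\<ge>M. \<forall>n\<ge>M. s m = s n \<or> N \<le> val (s m - s n)"
  proof (intro allI exI impI)
    fix N :: int and m n assume "nat N \<le> m" "nat N \<le> n"
    have "s m - s n \<in> \<I> (min m n)"
    proof (cases "n \<le> m")
      case True
      then show ?thesis
        using close[OF True] by (simp add: min_def)
    next
      case False
      then show ?thesis
        using ideal_sym[OF close[of m n]] by (simp add: min_def)
    qed
    then have "s m - s n \<in> \<I> (nat N)"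
      using ideal_antimono[of "nat N" "min m n"] \<open>nat N \<le> m\<close> \<open>nat N \<le> n\<close> by simp
    then show "s m = s n \<or> N \<le> val (s m - s n)"
      by (auto simp: mem_ideal_iff split: if_splits)
  qed
  then obtain L where L: "\<forall>N::int. \<exists>M. \<forall>n\<ge>M. s n = L \<or> N \<le> val (s n - L)"
    using cauchy_has_limit by blast
  show ?thesis
  proof (rule that)
    fix m
    obtain M where "\<forall>n\<ge>M. s n = L \<or> int m \<le> val (s n - L)"
      using L by blast
    then show "\<exists>M. \<forall>n\<ge>M. s n - L \<in> \<I> m"
      by (auto simp: mem_ideal_iff)
  qed
qed

lemma sqrt_approx_step:
  assumes z: "is_unit_v val z" and c: "c - z ^ 2 \<in> \<I> (n + 3)"
  shows "\<exists>z'. is_unit_v val z' \<and> z' - z \<in> \<I> (n + 2) \<and> c - z' ^ 2 \<in> \<I> (n + 4)"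
proof -
  obtain d where d: "d \<in> \<O>" "c - z ^ 2 = 2 ^ (n + 3) * d"
    using c by (auto simp: mem_ideal_two_power_iff)
  define e where "e = d / z"
  have e: "e \<in> \<O>" "e * z = d"
    using is_unit_v_divide[OF z d(1)] z by (auto simp: e_def is_unit_v_def)
  define z' where "z' = z + 2 ^ (n + 2) * e"
  have "z' ^ 2 = z ^ 2 + 2 ^ (n + 3) * (e * z) + 2 ^ (n + 4) * (2 ^ n * e ^ 2)"
    unfolding z'_def by (simp add: power2_eq_square algebra_simps power_add)
  then have "c - z' ^ 2 = 2 ^ (n + 4) * (- (2 ^ n * e ^ 2))"
    using d(2) e(2) by (simp add: algebra_simps)
  then have "c - z' ^ 2 \<in> \<I> (n + 4)"
    using e(1) by simp
  moreover have "z' - z = 2 ^ (n + 2) * e"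
    by (simp only: z'_def add_diff_cancel_left')
  then have "z' - z \<in> \<I> (n + 2)"
    using two_power_mult_in_ideal[OF e(1)] by (simp only:)
  moreover from this have "is_unit_v val z'"
    using is_unit_v_cong[OF z] ideal_antimono[of 1 "n + 2"] is_unit_v_in_vring[OF z] e(1)
    by (simp add: z'_def)
  ultimately show ?thesis
    by blast
qed

text \<open>Hensel's lemma for \<open>X\<^sup>2 - c\<close>: Newton steps \<open>z \<mapsto> z + (c - z\<^sup>2) / (2 z)\<close> converge.\<close>

lemma exists_sqrt:
  assumes "c - 1 \<in> \<I> 3"
  shows "\<exists>z. z ^ 2 = c"
proof -
  define next_root where
    "next_root n z = (SOME z'. is_unit_v val z' \<and> z' - z \<in> \<I> (n + 2) \<and> c - z' ^ 2 \<in> \<I> (n + 4))"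
    for n z
  define zs where "zs = rec_nat 1 next_root"
  have zs: "is_unit_v val (zs n) \<and> c - zs n ^ 2 \<in> \<I> (n + 3)" for n
  proof (induction n)
    case (Suc n)
    then show ?case
      using someI_ex[OF sqrt_approx_step[of "zs n" c n]]
      by (simp add: zs_def next_root_def add.commute)
  qed (use assms in \<open>simp add: zs_def\<close>)
  have "zs (Suc n) - zs n \<in> \<I> (n + 2)" for n
    using someI_ex[OF sqrt_approx_step[of "zs n" c n]] zs[of n]
    by (simp add: zs_def next_root_def)
  then have "zs (Suc n) - zs n \<in> \<I> n" for n
    using ideal_antimono[of n "n + 2"] by simp
  then obtain L where L: "\<And>m. \<exists>M. \<forall>n\<ge>M. zs n - L \<in> \<I> m"
    using ideal_cauchy_limit by blast
  have "c - L ^ 2 \<in> \<I> m" for m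
  proof -
    obtain M where M: "\<forall>n\<ge>M. zs n - L \<in> \<I> m"
      using L by blast
    define n where "n = max M m"
    have zs_n: "zs n \<in> \<O>" "c - zs n ^ 2 \<in> \<I> m" "zs n - L \<in> \<I> m"
      using zs[of n] is_unit_v_in_vring ideal_antimono[of m "n + 3"] M by (auto simp: n_def)
    then have "zs n - (zs n - L) \<in> \<O>"
      using ideal_subset_vring by blast
    then have "L \<in> \<O>"
      by simp
    then have "(c - zs n ^ 2) + (zs n - L) * (zs n + L) \<in> \<I> m"
      using zs_n by (intro ideal_add) auto
    moreover have "(c - zs n ^ 2) + (zs n - L) * (zs n + L) = c - L ^ 2"
      by (simp add: power2_eq_square algebra_simps)
    ultimately show ?thesis
      by simp
  qed
  then show ?thesis
    using ideal_all_imp_zero[of "c - L ^ 2"] by auto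
qed

section \<open>The ternary forms \<open>X\<^sub>0\<^sup>2 - (1 + 2u) X\<^sub>1\<^sup>2 - (1 + 2v) X\<^sub>2\<^sup>2\<close>\<close>

definition ternary :: "'k \<Rightarrow> 'k \<Rightarrow> 'k \<times> 'k \<times> 'k \<Rightarrow> 'k" where
  "ternary u v x = (case x of (a, b, c) \<Rightarrow> a ^ 2 - (1 + 2 * u) * b ^ 2 - (1 + 2 * v) * c ^ 2)"

lemma ternary_simp [simp]: "ternary u v (a, b, c) = a ^ 2 - (1 + 2 * u) * b ^ 2 - (1 + 2 * v) * c ^ 2"
  by (simp add: ternary_def)

text \<open>The binary form arising from the ternary one by \<open>ternary u v (g + h, g, h) = - 2 * binary u v g h\<close>.\<close>

definition binary :: "'k \<Rightarrow> 'k \<Rightarrow> 'k \<Rightarrow> 'k \<Rightarrow> 'k" where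
  "binary u v g h = u * g ^ 2 - g * h + v * h ^ 2"

definition anisotropic :: "'k \<Rightarrow> 'k \<Rightarrow> bool" where
  "anisotropic u v \<longleftrightarrow> (\<forall>a b c. ternary u v (a, b, c) = 0 \<longrightarrow> a = 0 \<and> b = 0 \<and> c = 0)"

lemma anisotropic_swap:
  assumes "anisotropic u v"
  shows "anisotropic v u"
  unfolding anisotropic_def
proof (intro allI impI)
  fix a b c assume "ternary v u (a, b, c) = 0"
  then have "ternary u v (a, c, b) = 0"
    by (simp add: algebra_simps)
  then show "a = 0 \<and> b = 0 \<and> c = 0"
    using assms unfolding anisotropic_def by blast
qed

lemma ternary_unit_not_in_ideal_3:
  assumes aniso: "anisotropic u v" and uv: "u \<in> \<O>" "v \<in> \<O>"
    and abc: "a \<in> \<O>" "c \<in> \<O>" and b: "is_unit_v val b"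
  shows "ternary u v (a, b, c) \<notin> \<I> 3"
proof
  assume B: "ternary u v (a, b, c) \<in> \<I> 3"
  define D where "D = (1 + 2 * u) * b ^ 2"
  have D: "is_unit_v val D"
    unfolding D_def power2_eq_square using b uv by (intro is_unit_v_mult is_unit_v_one_plus_two)
  then have "D \<noteq> 0"
    by (simp add: is_unit_v_def)
  define W where "W = (a ^ 2 - (1 + 2 * v) * c ^ 2) / D"
  obtain d where d: "d \<in> \<O>" "ternary u v (a, b, c) = 2 ^ 3 * d"
    using B by (auto simp: mem_ideal_two_power_iff)
  have "W - 1 = ternary u v (a, b, c) / D"
    using \<open>D \<noteq> 0\<close> by (simp add: W_def D_def field_simps)
  then have "W - 1 = 2 ^ 3 * (d / D)"
    unfolding d(2) by (simp only: times_divide_eq_right)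
  then have "W - 1 \<in> \<I> 3"
    using two_power_mult_in_ideal[OF is_unit_v_divide[OF D d(1)]] by (simp only:)
  then obtain z where "z ^ 2 = W"
    using exists_sqrt by blast
  then have "ternary u v (a, z * b, c) = 0"
    using \<open>D \<noteq> 0\<close> by (simp add: W_def D_def power_mult_distrib field_simps)
  then have "z * b = 0"
    using aniso unfolding anisotropic_def by blast
  then have "W = 0"
    using b \<open>z ^ 2 = W\<close> by (auto simp: is_unit_v_def)
  then show False
    using \<open>W - 1 \<in> \<I> 3\<close> by simp
qed

lemma two_mult_ideal_2_iff: "2 * y \<in> \<I> 2 \<longleftrightarrow> y \<in> \<I> 1"
  and four_mult_ideal_3_iff: "4 * y \<in> \<I> 3 \<longleftrightarrow> y \<in> \<I> 1"
  using two_power_mult_ideal_iff[of 1 y 1] two_power_mult_ideal_iff[of 2 y 1]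
  by (simp_all add: numeral_2_eq_2 numeral_3_eq_3)

lemma square_diff_in_ideal:
  assumes "a \<in> \<O>" "a' \<in> \<O>" "a - a' \<in> \<I> m"
  shows "a ^ 2 - a' ^ 2 \<in> \<I> m"
proof -
  have "a ^ 2 - a' ^ 2 = (a - a') * (a + a')"
    by (simp add: power2_eq_square algebra_simps)
  then show ?thesis
    using assms by simp
qed

lemma square_diff_in_ideal_Suc:
  assumes "a \<in> \<O>" "a' \<in> \<O>" "a - a' \<in> \<I> (Suc m)"
  shows "a ^ 2 - a' ^ 2 \<in> \<I> (Suc (Suc m))"
proof -
  have "(a - a') + 2 * a' \<in> \<I> 1"
    using assms ideal_antimono[of 1 "Suc m"] two_mult_in_ideal by (intro ideal_add) auto
  then have "(a - a') * ((a - a') + 2 * a') \<in> \<I> (Suc m + 1)"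
    by (rule ideal_mult[OF assms(3)])
  moreover have "a ^ 2 - a' ^ 2 = (a - a') * ((a - a') + 2 * a')"
    by (simp add: power2_eq_square algebra_simps)
  ultimately show ?thesis
    by simp
qed

lemma ternary_diff_in_ideal:
  assumes uv: "u \<in> \<O>" "v \<in> \<O>" and "a \<in> \<O>" "b \<in> \<O>" "c \<in> \<O>" "a' \<in> \<O>" "b' \<in> \<O>" "c' \<in> \<O>"
    and sq: "\<And>x y. x \<in> \<O> \<Longrightarrow> y \<in> \<O> \<Longrightarrow> x - y \<in> \<I> m \<Longrightarrow> x ^ 2 - y ^ 2 \<in> \<I> n"
    and "a - a' \<in> \<I> m" "b - b' \<in> \<I> m" "c - c' \<in> \<I> m"
  shows "ternary u v (a, b, c) - ternary u v (a', b', c') \<in> \<I> n"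
proof -
  have eq: "ternary u v (a, b, c) - ternary u v (a', b', c') =
      (a ^ 2 - a' ^ 2) - (1 + 2 * u) * (b ^ 2 - b' ^ 2) - (1 + 2 * v) * (c ^ 2 - c' ^ 2)"
    by (simp add: algebra_simps)
  have "a ^ 2 - a' ^ 2 \<in> \<I> n" "b ^ 2 - b' ^ 2 \<in> \<I> n" "c ^ 2 - c' ^ 2 \<in> \<I> n"
    using assms by (auto intro!: sq)
  then show ?thesis
    unfolding eq using uv by (intro ideal_diff[OF ideal_diff]) auto
qed

lemma invariant_mod_ternary:
  assumes "u \<in> \<O>" "v \<in> \<O>"
  shows "invariant_mod m (\<lambda>x. ternary u v x - \<rho> \<in> \<I> m)"
  by (rule invariant_modI, rule ideal_cong_diff_iff, rule ternary_diff_in_ideal)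
    (use assms square_diff_in_ideal in auto)

lemma invariant_mod_ternary_Suc:
  assumes "u \<in> \<O>" "v \<in> \<O>"
  shows "invariant_mod (Suc m) (\<lambda>x. ternary u v x - \<rho> \<in> \<I> (Suc (Suc m)))"
  by (rule invariant_modI, rule ideal_cong_diff_iff, rule ternary_diff_in_ideal)
    (use assms square_diff_in_ideal_Suc in auto)

lemma ternary_in_ideal_2:
  assumes "u \<in> \<O>" "v \<in> \<O>" "a \<in> \<I> 1" "b \<in> \<I> 1" "c \<in> \<I> 1"
  shows "ternary u v (a, b, c) \<in> \<I> 2"
proof -
  have "a * a \<in> \<I> 2" "b * b \<in> \<I> 2" "c * c \<in> \<I> 2"
    using ideal_mult[OF assms(3) assms(3)] ideal_mult[OF assms(4) assms(4)]
      ideal_mult[OF assms(5) assms(5)] by (simp_all add: numeral_2_eq_2)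
  then show ?thesis
    using assms(1,2) by (auto simp: power2_eq_square intro!: ideal_diff)
qed

lemma binary_unit_not_in_ideal_1:
  assumes aniso: "anisotropic u v" and uv: "u \<in> \<O>" "v \<in> \<O>"
    and g: "is_unit_v val g" and h: "h \<in> \<O>"
  shows "binary u v g h \<notin> \<I> 1"
proof
  assume "binary u v g h \<in> \<I> 1"
  then obtain d where d: "d \<in> \<O>" "binary u v g h = 2 * d"
    using mem_ideal_two_power_iff[of _ 1] by auto
  define den where "den = g + 2 * ((1 + v) * h)"
  have "is_unit_v val den"
    using g h uv is_unit_v_in_vring[OF g] two_mult_in_ideal
    by (intro is_unit_v_cong[OF g]) (auto simp: den_def)
  then have den: "den \<noteq> 0" "d / den \<in> \<O>"
    using is_unit_v_divide d(1) by (auto simp: is_unit_v_def)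
  define e where "e = d / den"
  have e: "e \<in> \<O>"
    using den(2) by (simp add: e_def)
  text \<open>\<open>(g + h + 2e, g, h - 2e)\<close> is an approximate zero of the ternary form with a unit entry.\<close>
  have "ternary u v (g + h + 2 * e, g, h - 2 * e) = - 2 * binary u v g h + 4 * (e * den) - 8 * v * e ^ 2"
    unfolding den_def binary_def by (simp add: algebra_simps power2_eq_square)
  also have "\<dots> = 2 ^ 3 * (- (v * e ^ 2))"
    using d(2) den(1) by (simp add: e_def)
  finally have "ternary u v (g + h + 2 * e, g, h - 2 * e) \<in> \<I> 3"
    using den(2) uv by (simp only:) (rule two_power_mult_in_ideal, simp add: e_def)
  moreover have "g + h + 2 * e \<in> \<O>" "h - 2 * e \<in> \<O>"
    using is_unit_v_in_vring[OF g] h e by auto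
  ultimately show False
    using ternary_unit_not_in_ideal_3[OF aniso uv _ _ g] by blast
qed

end

locale dyadic_form = dyadic_field val q for val :: "'k::field \<Rightarrow> int" and q :: nat +
  fixes u v :: 'k
  assumes unit_u: "is_unit_v val u" and unit_v: "is_unit_v val v"
    and anisotropic: "anisotropic u v"
begin

abbreviation B :: "'k \<times> 'k \<times> 'k \<Rightarrow> 'k" where
  "B \<equiv> ternary u v"

lemma u_in_vring [simp]: "u \<in> \<O>" and v_in_vring [simp]: "v \<in> \<O>"
  using unit_u unit_v by (simp_all add: is_unit_v_in_vring)

lemma binary_in_ideal_1_imp:
  assumes "g \<in> \<O>" "h \<in> \<O>" "binary u v g h \<in> \<I> 1"
  shows "g \<in> \<I> 1 \<and> h \<in> \<I> 1"
proof (rule ccontr)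
  assume "\<not> (g \<in> \<I> 1 \<and> h \<in> \<I> 1)"
  then consider "is_unit_v val g" | "is_unit_v val h"
    using assms by (auto simp: is_unit_v_iff)
  then show False
  proof cases
    case 1
    then show False
      using binary_unit_not_in_ideal_1[OF anisotropic _ _ _ assms(2)] assms(3) by simp
  next
    case 2
    have "binary v u h g = binary u v g h"
      by (simp add: binary_def algebra_simps)
    then show False
      using binary_unit_not_in_ideal_1[OF anisotropic_swap[OF anisotropic] _ _ 2 assms(1)] assms(3)
      by simp
  qed
qed

lemma ternary_in_ideal_2_imp:
  assumes abc: "a \<in> \<O>" "b \<in> \<O>" "c \<in> \<O>" and B: "B (a, b, c) \<in> \<I> 2"
  shows "a \<in> \<I> 1 \<and> b \<in> \<I> 1 \<and> c \<in> \<I> 1"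
proof -
  define W where "W = - (1 + u) * b ^ 2 - (1 + v) * c ^ 2 - a * b - a * c - b * c"
  have "W \<in> \<O>"
    using abc by (simp add: W_def)
  then have "B (a, b, c) \<in> \<I> 1" "2 * W \<in> \<I> 1"
    using B ideal_antimono[of 1 2] two_mult_in_ideal by auto
  then have "B (a, b, c) - 2 * W \<in> \<I> 1"
    by (rule ideal_diff)
  moreover have "(a + b + c) * (a + b + c) = B (a, b, c) - 2 * W"
    unfolding W_def by (simp add: algebra_simps power2_eq_square)
  ultimately have "a + b + c \<in> \<I> 1"
    using square_in_ideal_1_imp by metis
  define f where "f = a - b - c"
  have "2 * (b + c) \<in> \<I> 1"
    using abc two_mult_in_ideal[of "b + c"] by simp
  then have "(a + b + c) - 2 * (b + c) \<in> \<I> 1"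
    by (rule ideal_diff[OF \<open>a + b + c \<in> \<I> 1\<close>])
  moreover have "f = (a + b + c) - 2 * (b + c)"
    by (simp add: f_def)
  ultimately have f: "f \<in> \<I> 1"
    by (simp only:)
  text \<open>\<open>f \<equiv> 0\<close> makes \<open>B(a, b, c) \<equiv> - 2 binary(b, c)\<close> modulo \<open>4\<close>.\<close>
  have "2 * binary u v b c = f * f + 2 * f * (b + c) - B (a, b, c)"
    unfolding f_def binary_def by (simp add: algebra_simps power2_eq_square)
  moreover have "f * f \<in> \<I> 2" "2 * f * (b + c) \<in> \<I> 2"
    using ideal_mult[OF f f] ideal_mult[OF two_in_ideal f] abc by (simp_all add: numeral_2_eq_2)
  ultimately have "2 * binary u v b c \<in> \<I> 2"
    using B by (auto intro!: ideal_diff)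
  then have "b \<in> \<I> 1 \<and> c \<in> \<I> 1"
    using binary_in_ideal_1_imp abc two_mult_ideal_2_iff by blast
  moreover have "a = f + b + c"
    by (simp add: f_def)
  ultimately show ?thesis
    using f by auto
qed

end

context dyadic_field
begin

lemma square_cong_imp_cong:
  assumes "r \<in> \<O>" "r' \<in> \<O>" "r ^ 2 - r' ^ 2 \<in> \<I> 1"
  shows "r - r' \<in> \<I> 1"
proof -
  have "r' * (r - r') \<in> \<O>"
    using assms by simp
  then have "2 * (r' * (r - r')) \<in> \<I> 1"
    by (rule two_mult_in_ideal)
  then have "(r ^ 2 - r' ^ 2) - 2 * (r' * (r - r')) \<in> \<I> 1"
    by (rule ideal_diff[OF assms(3)])
  moreover have "(r ^ 2 - r' ^ 2) - 2 * (r' * (r - r')) = (r - r') * (r - r')"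
    by (simp add: algebra_simps power2_eq_square)
  ultimately have "(r - r') * (r - r') \<in> \<I> 1"
    by simp
  then show ?thesis
    by (rule square_in_ideal_1_imp)
qed

text \<open>Squaring permutes the digits modulo \<open>2\<close> (Frobenius of the residue field).\<close>

lemma ex1_digit_square_cong:
  assumes c: "c \<in> \<O>"
  shows "\<exists>!r. r \<in> digits \<and> r ^ 2 - c \<in> \<I> 1"
proof -
  define f where "f r = digit_of (r ^ 2)" for r
  have f_digits: "f ` digits \<subseteq> digits"
    using digit_of digit_in_vring by (auto simp: f_def)
  have square_digit: "r ^ 2 - f r \<in> \<I> 1" if "r \<in> digits" for r
    using digit_of[of "r ^ 2"] digit_in_vring[OF that] by (simp add: f_def)
  have "inj_on f digits"
  proof (rule inj_onI)
    fix r r' assume r: "r \<in> digits" "r' \<in> digits" and "f r = f r'"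
    then have "r' ^ 2 - f r \<in> \<I> 1"
      using square_digit[OF r(2)] by simp
    then have "r ^ 2 - r' ^ 2 \<in> \<I> 1"
      using ideal_trans[OF square_digit[OF r(1)] ideal_sym] by blast
    then show "r = r'"
      using square_cong_imp_cong digits_unique digit_in_vring r by blast
  qed
  then have "f ` digits = digits"
    using endo_inj_surj[OF finite_digits f_digits] by blast
  then obtain r where r: "r \<in> digits" "f r = digit_of c"
    using digit_of[OF c] by (metis imageE)
  then have "r ^ 2 - c \<in> \<I> 1"
    using ideal_trans[OF square_digit[OF r(1)] ideal_sym[of c]] digit_of[OF c] by simp
  moreover have "r' = r" if "r' \<in> digits" "r' ^ 2 - c \<in> \<I> 1" for r'
    using ideal_trans[OF that(2) ideal_sym[OF \<open>r ^ 2 - c \<in> \<I> 1\<close>]] r(1) that(1)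
      square_cong_imp_cong digits_unique digit_in_vring by blast
  ultimately show ?thesis
    using r(1) by blast
qed

lemma ex1_digit_linear:
  assumes l: "is_unit_v val l" and H: "H \<in> \<O>"
  shows "\<exists>!a. a \<in> digits \<and> l * a + H \<in> \<I> 1"
proof -
  define x where "x = - H / l"
  have x: "x \<in> \<O>" "l * x + H = 0"
    using is_unit_v_divide[OF l] H l by (auto simp: x_def is_unit_v_def)
  define a where "a = digit_of x"
  have a: "a \<in> digits" "x - a \<in> \<I> 1"
    using digit_of[OF x(1)] by (auto simp: a_def)
  have lin: "l * b + H \<in> \<I> 1 \<longleftrightarrow> x - b \<in> \<I> 1" if "b \<in> \<O>" for b
  proof -
    have "l * b + H = - (l * (x - b))"
      using x(2) by (simp add: algebra_simps)
    then show ?thesis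
      using is_unit_v_mult_ideal_iff[OF l] by simp
  qed
  show ?thesis
  proof (rule ex1I[of _ a])
    show "a \<in> digits \<and> l * a + H \<in> \<I> 1"
      using a lin digit_in_vring by blast
    show "b = a" if "b \<in> digits \<and> l * b + H \<in> \<I> 1" for b
      using that lin[of b] digit_in_vring a ideal_trans[OF ideal_sym] digits_unique by metis
  qed
qed

lemma card_linear_mod_2:
  assumes "c \<in> \<O>" "l0 \<in> \<O>" "l1 \<in> \<O>" "l2 \<in> \<O>"
    and "is_unit_v val l0 \<or> is_unit_v val l1 \<or> is_unit_v val l2"
  shows "card {e \<in> cube digits. (case e of (e0, e1, e2) \<Rightarrow> c + l0 * e0 + l1 * e1 + l2 * e2 \<in> \<I> 1)} = q ^ 2"
  using assms(5)
proof (elim disjE)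
  assume "is_unit_v val l0"
  show ?thesis
  proof (rule card_cube_digits_unique)
    fix b e assume "b \<in> digits" "e \<in> digits"
    then have "c + l1 * b + l2 * e \<in> \<O>"
      using assms(1-4) digit_in_vring by simp
    from ex1_digit_linear[OF \<open>is_unit_v val l0\<close> this]
    show "\<exists>!a. a \<in> digits \<and> (case (a, b, e) of (e0, e1, e2) \<Rightarrow> c + l0 * e0 + l1 * e1 + l2 * e2 \<in> \<I> 1)"
      by (simp add: algebra_simps)
  qed
next
  assume "is_unit_v val l1"
  show ?thesis
  proof (rule card_cube_digits_unique_second)
    fix a e assume "a \<in> digits" "e \<in> digits"
    then have "c + l0 * a + l2 * e \<in> \<O>"
      using assms(1-4) digit_in_vring by simp
    from ex1_digit_linear[OF \<open>is_unit_v val l1\<close> this]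
    show "\<exists>!b. b \<in> digits \<and> (case (a, b, e) of (e0, e1, e2) \<Rightarrow> c + l0 * e0 + l1 * e1 + l2 * e2 \<in> \<I> 1)"
      by (simp add: algebra_simps)
  qed
next
  assume "is_unit_v val l2"
  show ?thesis
  proof (rule card_cube_digits_unique_third)
    fix a b assume "a \<in> digits" "b \<in> digits"
    then have "c + l0 * a + l1 * b \<in> \<O>"
      using assms(1-4) digit_in_vring by simp
    from ex1_digit_linear[OF \<open>is_unit_v val l2\<close> this]
    show "\<exists>!e. e \<in> digits \<and> (case (a, b, e) of (e0, e1, e2) \<Rightarrow> c + l0 * e0 + l1 * e1 + l2 * e2 \<in> \<I> 1)"
      by (simp add: algebra_simps)
  qed
qed

end

context dyadic_form
begin

section \<open>Counting solutions of \<open>B(x) \<equiv> \<rho>\<close>\<close>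

lemma count_mod_1:
  assumes "\<rho> \<in> \<O>"
  shows "count_mod 1 (\<lambda>x. B x - \<rho> \<in> \<I> 1) = q ^ 2"
  unfolding count_mod_def reps_1
proof (rule card_cube_digits_unique)
  fix b c assume "b \<in> digits" "c \<in> digits"
  define C where "C = \<rho> + (1 + 2 * u) * b ^ 2 + (1 + 2 * v) * c ^ 2"
  have C: "C \<in> \<O>"
    using assms \<open>b \<in> digits\<close> \<open>c \<in> digits\<close> digit_in_vring by (simp add: C_def)
  have eq: "B (a, b, c) - \<rho> = a ^ 2 - C" for a
    by (simp add: C_def algebra_simps)
  show "\<exists>!a. a \<in> digits \<and> B (a, b, c) - \<rho> \<in> \<I> 1"
    unfolding eq using C by (rule ex1_digit_square_cong)
qed

lemma count_mod_2_of_ideal_2: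
  assumes "\<rho> \<in> \<I> 2"
  shows "count_mod 2 (\<lambda>x. B x - \<rho> \<in> \<I> 2) = q ^ 3"
proof -
  define even3 where "even3 x \<longleftrightarrow> (case x of (a, b, c) \<Rightarrow> a \<in> \<I> 1 \<and> b \<in> \<I> 1 \<and> c \<in> \<I> 1)"
    for x :: "'k \<times> 'k \<times> 'k"
  have even3: "B x - \<rho> \<in> \<I> 2 \<longleftrightarrow> even3 x" if x_reps: "x \<in> cube (reps 2)" for x
  proof -
    obtain a b c where x: "x = (a, b, c)" "a \<in> \<O>" "b \<in> \<O>" "c \<in> \<O>"
      using cube_reps_subset[OF x_reps] by (cases x) auto
    have "B x - \<rho> \<in> \<I> 2 \<longleftrightarrow> B x \<in> \<I> 2"
      using ideal_cong_iff[of "B x - \<rho>" "B x" 2] assms by simp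
    also have "\<dots> \<longleftrightarrow> a \<in> \<I> 1 \<and> b \<in> \<I> 1 \<and> c \<in> \<I> 1"
      using ternary_in_ideal_2_imp[OF x(2-4)] ternary_in_ideal_2[of u v a b c] x(1) by auto
    also have "\<dots> \<longleftrightarrow> even3 x"
      by (simp add: even3_def x(1))
    finally show ?thesis .
  qed
  have "{x \<in> cube (reps 2). B x - \<rho> \<in> \<I> 2} = {x \<in> cube (reps 2). even3 x}"
    using even3 by (intro Collect_cong) auto
  then have "count_mod 2 (\<lambda>x. B x - \<rho> \<in> \<I> 2) = count_mod 2 even3"
    by (simp add: count_mod_def)
  also have "\<dots> = q ^ 3 * count_mod 1 even3"
  proof -
    have "invariant_mod 1 even3"
    proof (rule invariant_modI)
      fix a b c a' b' c' :: 'k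
      assume "a - a' \<in> \<I> 1" "b - b' \<in> \<I> 1" "c - c' \<in> \<I> 1"
      then show "even3 (a, b, c) = even3 (a', b', c')"
        using ideal_cong_iff[of a a' 1] ideal_cong_iff[of b b' 1] ideal_cong_iff[of c c' 1]
        by (simp add: even3_def)
    qed
    then show ?thesis
      using count_mod_refine[of 1 even3 1] by (simp add: numeral_2_eq_2)
  qed
  also have "count_mod 1 even3 = 1"
  proof -
    have "{x \<in> cube digits. even3 x} = {(0, 0, 0)}"
      using digit_in_ideal_iff zero_in_digits by (auto simp: even3_def cube_def)
    then show ?thesis
      unfolding count_mod_def reps_1 by simp
  qed
  finally show ?thesis
    by simp
qed

lemma ternary_shift_nonzero_digits_not_in_ideal_2:
  assumes abc: "a \<in> digits" "b \<in> digits" "c \<in> digits" "(a, b, c) \<noteq> (0, 0, 0)"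
    and t: "a' \<in> \<O>" "b' \<in> \<O>" "c' \<in> \<O>"
  shows "B (a + 2 * a', b + 2 * b', c + 2 * c') \<notin> \<I> 2"
proof
  assume "B (a + 2 * a', b + 2 * b', c + 2 * c') \<in> \<I> 2"
  moreover have "a + 2 * a' \<in> \<O>" "b + 2 * b' \<in> \<O>" "c + 2 * c' \<in> \<O>"
    using abc t digit_in_vring by auto
  ultimately have h: "a + 2 * a' \<in> \<I> 1" "b + 2 * b' \<in> \<I> 1" "c + 2 * c' \<in> \<I> 1"
    using ternary_in_ideal_2_imp by blast+
  have "(a + 2 * a') - 2 * a' \<in> \<I> 1" "(b + 2 * b') - 2 * b' \<in> \<I> 1" "(c + 2 * c') - 2 * c' \<in> \<I> 1"
    using ideal_diff[OF h(1) two_mult_in_ideal[OF t(1)]] ideal_diff[OF h(2) two_mult_in_ideal[OF t(2)]]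
      ideal_diff[OF h(3) two_mult_in_ideal[OF t(3)]] .
  then show False
    using abc digit_in_ideal_iff by simp
qed

lemma count_mod_four_mult:
  assumes \<rho>: "\<rho> \<in> \<O>"
  shows "count_mod (Suc (Suc (Suc k))) (\<lambda>x. B x - 4 * \<rho> \<in> \<I> (Suc (Suc (Suc k))))
       = q ^ 3 * count_mod (Suc k) (\<lambda>x. B x - \<rho> \<in> \<I> (Suc k))"
proof -
  let ?P = "\<lambda>x. B x - 4 * \<rho> \<in> \<I> (Suc (Suc (Suc k)))"
  let ?P' = "\<lambda>x. B x - \<rho> \<in> \<I> (Suc k)"
  have inner: "card {t \<in> cube (reps (Suc (Suc k))). ?P (shift3 1 s t)} =
      (if s = (0, 0, 0) then q ^ 3 * count_mod (Suc k) ?P' else 0)" if s: "s \<in> cube digits" for s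
  proof (cases "s = (0, 0, 0)")
    case True
    have "?P (shift3 1 s t) \<longleftrightarrow> ?P' t" for t
    proof -
      have "B (shift3 1 s t) - 4 * \<rho> = 4 * (B t - \<rho>)"
        using True by (cases t) (simp add: algebra_simps power2_eq_square)
      then show ?thesis
        by (simp only: four_mult_ideal_iff)
    qed
    then have "card {t \<in> cube (reps (Suc (Suc k))). ?P (shift3 1 s t)} = count_mod (Suc k + 1) ?P'"
      by (simp add: count_mod_def)
    also have "\<dots> = q ^ 3 * count_mod (Suc k) ?P'"
      using count_mod_refine[OF invariant_mod_ternary[OF u_in_vring v_in_vring, of "Suc k" \<rho>], of 1]
      by simp
    finally show ?thesis
      using True by simp
  next
    case False
    obtain a b c where abc: "s = (a, b, c)" "a \<in> digits" "b \<in> digits" "c \<in> digits"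
      using s by (cases s) auto
    have "\<not> ?P (shift3 1 s t)" if t: "t \<in> cube (reps (Suc (Suc k)))" for t
    proof
      assume "?P (shift3 1 s t)"
      then have "B (shift3 1 s t) - 4 * \<rho> \<in> \<I> 2"
        using ideal_antimono[of 2 "Suc (Suc (Suc k))"] by simp
      then have "(B (shift3 1 s t) - 4 * \<rho>) + 4 * \<rho> \<in> \<I> 2"
        using four_mult_in_ideal[OF \<rho>] by (rule ideal_add)
      moreover obtain a' b' c' where t': "t = (a', b', c')" "a' \<in> \<O>" "b' \<in> \<O>" "c' \<in> \<O>"
        using cube_reps_subset[OF t] by (cases t) auto
      ultimately show False
        using ternary_shift_nonzero_digits_not_in_ideal_2[OF abc(2-4) False[unfolded abc(1)] t'(2-4)]
        by (simp add: abc(1) del: ternary_simp)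
    qed
    then have no_solution: "{t \<in> cube (reps (Suc (Suc k))). ?P (shift3 1 s t)} = {}"
      by blast
    show ?thesis
      unfolding no_solution using False by simp
  qed
  have "count_mod (1 + Suc (Suc k)) ?P
      = (\<Sum>s\<in>cube digits. card {t \<in> cube (reps (Suc (Suc k))). ?P (shift3 1 s t)})"
    using count_mod_decomp[where j = 1 and k = "Suc (Suc k)",
        OF invariant_mod_ternary[OF u_in_vring v_in_vring, where \<rho> = "4 * \<rho>"]] by simp
  also have "\<dots> = q ^ 3 * count_mod (Suc k) ?P'"
    using inner zero_in_digits finite_cube[OF finite_digits] by (simp add: sum.delta)
  finally show ?thesis
    by simp
qed

lemma count_mod_unit_square:
  assumes t: "is_unit_v val t"
  shows "count_mod m (\<lambda>x. B x - t ^ 2 \<in> \<I> m) = count_mod m (\<lambda>x. B x - 1 \<in> \<I> m)"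
proof -
  let ?P = "\<lambda>x. B x - t ^ 2 \<in> \<I> m"
  define scale where "scale s x = (case x of (a, b, c) \<Rightarrow> (s * a, s * b, s * c))" for s :: 'k and x
  have t': "t \<in> \<O>" "inverse t \<in> \<O>" "t \<noteq> 0"
    using t is_unit_v_inverse[OF t] is_unit_v_in_vring by (auto simp: is_unit_v_def)
  have "card {x\<in>cube (reps m). ?P (scale t x)} = card {y\<in>cube (reps m). ?P y}"
  proof (rule count_mod_transfer[OF residue_system_reps residue_system_reps,
        where h = "scale (inverse t)"])
    show "invariant_mod m ?P"
      by (rule invariant_mod_ternary) simp_all
  qed (use t' in \<open>auto simp: scale_def right_diff_distrib[symmetric] split: prod.splits\<close>)
  moreover have "?P (scale t x) \<longleftrightarrow> B x - 1 \<in> \<I> m" for x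
  proof -
    have "B (scale t x) - t ^ 2 = (t * t) * (B x - 1)"
      by (cases x) (simp add: scale_def algebra_simps power2_eq_square)
    then show ?thesis
      using is_unit_v_mult_ideal_iff[OF is_unit_v_mult[OF t t]] by simp
  qed
  ultimately show ?thesis
    by (simp add: count_mod_def)
qed

end

context dyadic_field
begin

definition cong_pair :: "'k \<times> 'k \<Rightarrow> 'k \<times> 'k \<Rightarrow> bool" where
  "cong_pair g g' \<longleftrightarrow> fst g - fst g' \<in> \<I> 1 \<and> snd g - snd g' \<in> \<I> 1"

lemma cong3_linear:
  assumes "cong3 m (a, b, c) (a', b', c')" "l0 \<in> \<O>" "l1 \<in> \<O>" "l2 \<in> \<O>"
  shows "(l0 * a + l1 * b + l2 * c) - (l0 * a' + l1 * b' + l2 * c') \<in> \<I> m"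
proof -
  have "(l0 * a + l1 * b + l2 * c) - (l0 * a' + l1 * b' + l2 * c') =
      l0 * (a - a') + l1 * (b - b') + l2 * (c - c')"
    by (simp add: algebra_simps)
  moreover have "l0 * (a - a') + l1 * (b - b') + l2 * (c - c') \<in> \<I> m"
    using assms by (intro ideal_add vring_mult_ideal) auto
  ultimately show ?thesis
    by simp
qed

lemma card_digit_pairs_transfer:
  assumes f: "\<And>x. x \<in> \<O> \<times> \<O> \<Longrightarrow> f x \<in> \<O> \<times> \<O>"
      "\<And>x y. x \<in> \<O> \<times> \<O> \<Longrightarrow> y \<in> \<O> \<times> \<O> \<Longrightarrow> cong_pair x y \<Longrightarrow> cong_pair (f x) (f y)"
    and h: "\<And>x. x \<in> \<O> \<times> \<O> \<Longrightarrow> h x \<in> \<O> \<times> \<O>"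
      "\<And>x y. x \<in> \<O> \<times> \<O> \<Longrightarrow> y \<in> \<O> \<times> \<O> \<Longrightarrow> cong_pair x y \<Longrightarrow> cong_pair (h x) (h y)"
    and inverse: "\<And>x. x \<in> \<O> \<times> \<O> \<Longrightarrow> h (f x) = x" "\<And>x. x \<in> \<O> \<times> \<O> \<Longrightarrow> f (h x) = x"
    and P: "\<And>x y. x \<in> \<O> \<times> \<O> \<Longrightarrow> y \<in> \<O> \<times> \<O> \<Longrightarrow> cong_pair x y \<Longrightarrow> P x = P y"
  shows "card {x\<in>digits \<times> digits. P (f x)} = card {y\<in>digits \<times> digits. P y}"
proof -
  have subset: "digits \<times> digits \<subseteq> \<O> \<times> \<O>"
    using digits_subset_vring by blast
  have exists: "\<exists>d\<in>digits \<times> digits. cong_pair x d" if x: "x \<in> \<O> \<times> \<O>" for x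
  proof -
    obtain a b where "x = (a, b)" "a \<in> \<O>" "b \<in> \<O>"
      using x by blast
    moreover obtain a' b' where "a' \<in> digits" "a - a' \<in> \<I> 1" "b' \<in> digits" "b - b' \<in> \<I> 1"
      using digits_exists calculation(2,3) by metis
    ultimately show ?thesis
      by (auto simp: cong_pair_def)
  qed
  have unique: "d = d'" if "d \<in> digits \<times> digits" "d' \<in> digits \<times> digits" "cong_pair d d'" for d d'
    using that digits_unique by (cases d, cases d') (auto simp: cong_pair_def)
  have sym: "cong_pair y x" if "cong_pair x y" for x y
    using that ideal_sym[of "fst x" "fst y" 1] ideal_sym[of "snd x" "snd y" 1]
    by (simp add: cong_pair_def)
  have trans: "cong_pair x z" if "cong_pair x y" "cong_pair y z" for x y z
    using that ideal_trans[of "fst x" "fst y" 1 "fst z"] ideal_trans[of "snd x" "snd y" 1 "snd z"]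
    by (simp add: cong_pair_def)
  show ?thesis
    by (rule card_transversal_bij[where A = "\<O> \<times> \<O>" and E = cong_pair and h = h])
      (fact subset exists unique f h inverse P | (rule sym trans; assumption))+
qed

end

context dyadic_form
begin

lemma binary_cong:
  assumes "g \<in> \<O>" "h \<in> \<O>" "g' \<in> \<O>" "h' \<in> \<O>" "g - g' \<in> \<I> 1" "h - h' \<in> \<I> 1"
  shows "binary u v g h - binary u v g' h' \<in> \<I> 1"
proof -
  have "binary u v g h - binary u v g' h' =
      u * (g ^ 2 - g' ^ 2) - (g * (h - h') + h' * (g - g')) + v * (h ^ 2 - h' ^ 2)"
    by (simp add: binary_def algebra_simps)
  moreover have "u * (g ^ 2 - g' ^ 2) \<in> \<I> 1" "v * (h ^ 2 - h' ^ 2) \<in> \<I> 1"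
    using vring_mult_ideal[OF u_in_vring square_diff_in_ideal[OF assms(1,3,5)]]
      vring_mult_ideal[OF v_in_vring square_diff_in_ideal[OF assms(2,4,6)]] .
  moreover have "g * (h - h') + h' * (g - g') \<in> \<I> 1"
    using assms by (intro ideal_add vring_mult_ideal) auto
  ultimately show ?thesis
    by (simp only:) (rule ideal_add[OF ideal_diff]; assumption)
qed

definition rep_count :: "'k \<Rightarrow> nat" where
  "rep_count c = card {g \<in> digits \<times> digits. binary u v (fst g) (snd g) - c \<in> \<I> 1}"

lemma rep_count_cong:
  assumes "c - c' \<in> \<I> 1"
  shows "rep_count c = rep_count c'"
proof -
  have "binary u v a b - c \<in> \<I> 1 \<longleftrightarrow> binary u v a b - c' \<in> \<I> 1" for a b
    using ideal_cong_iff[of "binary u v a b - c" "binary u v a b - c'" 1] ideal_sym[OF assms] by simp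
  then show ?thesis
    by (simp add: rep_count_def)
qed

lemma rep_count_scale:
  assumes l: "is_unit_v val l"
  shows "rep_count (l ^ 2 * c) = rep_count c"
proof -
  let ?P = "\<lambda>g. binary u v (fst g) (snd g) - l ^ 2 * c \<in> \<I> 1"
  have l': "l \<in> \<O>" "inverse l \<in> \<O>" "l \<noteq> 0"
    using l is_unit_v_inverse[OF l] is_unit_v_in_vring by (auto simp: is_unit_v_def)
  have "card {x\<in>digits \<times> digits. ?P ((\<lambda>(a, b). (l * a, l * b)) x)} = card {y\<in>digits \<times> digits. ?P y}"
  proof (rule card_digit_pairs_transfer[where h = "\<lambda>(a, b). (inverse l * a, inverse l * b)"])
    show "?P x = ?P y" if "x \<in> \<O> \<times> \<O>" "y \<in> \<O> \<times> \<O>" "cong_pair x y" for x y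
      using that binary_cong[of "fst x" "snd x" "fst y" "snd y"]
        ideal_cong_diff_iff[of "binary u v (fst x) (snd x)" "binary u v (fst y) (snd y)" 1]
      by (auto simp: cong_pair_def)
  qed (use l' in \<open>auto simp: cong_pair_def right_diff_distrib[symmetric]\<close>)
  moreover have "?P ((\<lambda>(a, b). (l * a, l * b)) g) \<longleftrightarrow> binary u v (fst g) (snd g) - c \<in> \<I> 1" for g
  proof -
    have "binary u v (l * fst g) (l * snd g) - l ^ 2 * c = (l * l) * (binary u v (fst g) (snd g) - c)"
      by (simp add: binary_def algebra_simps power2_eq_square)
    then show ?thesis
      using is_unit_v_mult_ideal_iff[OF is_unit_v_mult[OF l l]] by (simp add: case_prod_beta)
  qed
  ultimately show ?thesis
    by (simp add: rep_count_def)
qed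

lemma rep_count_unit:
  assumes c: "is_unit_v val c"
  shows "rep_count c = rep_count 1"
proof -
  obtain r where r: "r \<in> digits" "r ^ 2 - c \<in> \<I> 1"
    using ex1_digit_square_cong[OF is_unit_v_in_vring[OF c]] by blast
  have "is_unit_v val r"
  proof (rule ccontr)
    assume "\<not> is_unit_v val r"
    then have "r * r \<in> \<I> 1"
      using digit_in_vring[OF r(1)] by (simp add: is_unit_v_iff)
    then have "c \<in> \<I> 1"
      using ideal_cong_iff[OF r(2)] by (simp add: power2_eq_square)
    then show False
      using c by (simp add: is_unit_v_iff)
  qed
  have "rep_count c = rep_count (r ^ 2 * 1)"
    using rep_count_cong[OF ideal_sym[OF r(2)]] by simp
  also have "\<dots> = rep_count 1"
    by (rule rep_count_scale[OF \<open>is_unit_v val r\<close>])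
  finally show ?thesis .
qed

lemma binary_digits_in_ideal_iff:
  "g \<in> digits \<Longrightarrow> h \<in> digits \<Longrightarrow> binary u v g h \<in> \<I> 1 \<longleftrightarrow> g = 0 \<and> h = 0"
  using binary_in_ideal_1_imp digit_in_vring digit_in_ideal_iff by (auto simp: binary_def)

lemma sum_rep_count: "(\<Sum>c\<in>digits - {0}. rep_count c) = q ^ 2 - 1"
proof -
  define A where "A c = {g \<in> digits \<times> digits. binary u v (fst g) (snd g) - c \<in> \<I> 1}" for c
  have disjoint: "A i \<inter> A j = {}" if "i \<in> digits" "j \<in> digits" "i \<noteq> j" for i j
  proof -
    have "i - j \<notin> \<I> 1"
      using digits_unique that by blast
    moreover have "i - j \<in> \<I> 1" if "x - i \<in> \<I> 1" "x - j \<in> \<I> 1" for x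
      using ideal_trans[OF ideal_sym[OF that(1)] that(2)] .
    ultimately show ?thesis
      by (auto simp: A_def)
  qed
  have "\<Union> (A ` (digits - {0})) = digits \<times> digits - {(0, 0)}"
  proof (intro equalityI subsetI)
    fix g assume "g \<in> \<Union> (A ` (digits - {0}))"
    then obtain c where c: "c \<in> digits" "c \<noteq> 0" "g \<in> digits \<times> digits"
      "binary u v (fst g) (snd g) - c \<in> \<I> 1"
      by (auto simp: A_def)
    then have "binary u v (fst g) (snd g) \<notin> \<I> 1"
      using ideal_cong_iff[OF c(4)] digit_in_ideal_iff by simp
    then show "g \<in> digits \<times> digits - {(0, 0)}"
      using c(3) by (auto simp: binary_def)
  next
    fix g assume g: "g \<in> digits \<times> digits - {(0, 0)}"
    then have "binary u v (fst g) (snd g) \<notin> \<I> 1" "binary u v (fst g) (snd g) \<in> \<O>"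
      using binary_digits_in_ideal_iff digit_in_vring by (auto simp: binary_def)
    moreover define c where "c = digit_of (binary u v (fst g) (snd g))"
    ultimately have c: "c \<in> digits" "binary u v (fst g) (snd g) - c \<in> \<I> 1"
      using digit_of by auto
    moreover from this have "c \<noteq> 0"
      using \<open>binary u v (fst g) (snd g) \<notin> \<I> 1\<close> by auto
    ultimately have "c \<in> digits" "c \<noteq> 0" "g \<in> A c"
      using g by (auto simp: A_def)
    then show "g \<in> \<Union> (A ` (digits - {0}))"
      by blast
  qed
  moreover have "(\<Sum>c\<in>digits - {0}. card (A c)) = card (\<Union> (A ` (digits - {0})))"
    using finite_digits disjoint by (intro card_UN_disjoint[symmetric]) (auto simp: A_def)
  ultimately show ?thesis
    using finite_digits card_digits zero_in_digits
    by (simp add: A_def rep_count_def card_cartesian_product power2_eq_square)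
qed

lemma rep_count_one: "rep_count 1 = q + 1"
proof -
  have "(q - 1) * rep_count 1 = (\<Sum>c\<in>digits - {0}. rep_count 1)"
    using finite_digits card_digits zero_in_digits by simp
  also have "\<dots> = (\<Sum>c\<in>digits - {0}. rep_count c)"
  proof (rule sum.cong)
    fix c assume "c \<in> digits - {0}"
    then have "is_unit_v val c"
      using digit_in_vring digit_in_ideal_iff by (simp add: is_unit_v_iff)
    then show "rep_count 1 = rep_count c"
      by (simp only: rep_count_unit)
  qed simp
  also have "\<dots> = (q - 1) * (q + 1)"
    using sum_rep_count by (simp add: power2_eq_square algebra_simps)
  finally show ?thesis
    using two_le_q by (subst (asm) mult_left_cancel) auto
qed

lemma ternary_one_mod_4_iff:
  assumes abc: "a \<in> \<O>" "b \<in> \<O>" "c \<in> \<O>"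
  shows "B (a + b + c, b, c) - 1 \<in> \<I> 2 \<longleftrightarrow> a - 1 \<in> \<I> 1 \<and> binary u v b c - b - c \<in> \<I> 1"
proof -
  have B: "B (a + b + c, b, c) - 1 = (a ^ 2 - 1) + 2 * (a * (b + c) - binary u v b c)"
    by (simp add: binary_def algebra_simps power2_eq_square)
  have "a ^ 2 - 1 \<in> \<I> 1 \<longleftrightarrow> a - 1 \<in> \<I> 1"
    using square_cong_imp_cong[of a 1] square_diff_in_ideal[of a 1 1] abc by auto
  moreover have "a * (b + c) - binary u v b c \<in> \<O>"
    using abc by (simp add: binary_def)
  then have "(B (a + b + c, b, c) - 1) - (a ^ 2 - 1) \<in> \<I> 1"
    unfolding B add_diff_cancel_left' by (rule two_mult_in_ideal)
  ultimately have a: "B (a + b + c, b, c) - 1 \<in> \<I> 1 \<longleftrightarrow> a - 1 \<in> \<I> 1"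
    using ideal_cong_iff by blast
  show ?thesis
  proof (cases "a - 1 \<in> \<I> 1")
    case True
    then obtain g where g: "g \<in> \<O>" "a = 1 + 2 * g"
      using mem_ideal_two_power_iff[of "a - 1" 1] by (auto simp: algebra_simps)
    define G where "G = g + g ^ 2 + g * (b + c)"
    define D where "D = binary u v b c - b - c"
    have "B (a + b + c, b, c) - 1 = 4 * G - 2 * D"
      unfolding B g(2) G_def D_def by (simp add: binary_def algebra_simps power2_eq_square)
    then have "(B (a + b + c, b, c) - 1) - (- (2 * D)) = 4 * G"
      by simp
    moreover have "G \<in> \<O>"
      using g abc by (simp add: G_def)
    then have "4 * G \<in> \<I> 2"
      by (rule four_mult_in_ideal)
    ultimately have "B (a + b + c, b, c) - 1 \<in> \<I> 2 \<longleftrightarrow> - (2 * D) \<in> \<I> 2"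
      by (intro ideal_cong_iff) simp
    also have "\<dots> \<longleftrightarrow> D \<in> \<I> 1"
      by (simp only: ideal_minus_iff two_mult_ideal_2_iff)
    finally show ?thesis
      using True unfolding D_def by blast
  next
    case False
    then show ?thesis
      using a ideal_antimono[of 1 2] by auto
  qed
qed

lemma count_mod_one_mod_4_eq_card:
  "count_mod 1 (\<lambda>x. B x - 1 \<in> \<I> 2) =
    card {g \<in> digits \<times> digits. binary u v (fst g) (snd g) - fst g - snd g \<in> \<I> 1}"
proof -
  let ?P = "\<lambda>x. B x - 1 \<in> \<I> 2"
  let ?C = "\<lambda>g. binary u v (fst g) (snd g) - fst g - snd g \<in> \<I> 1"
  define f where "f x = (case x of (a, b, c) \<Rightarrow> (a + b + c, b, c))" for x :: "'k \<times> 'k \<times> 'k"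
  have "card {x\<in>cube digits. ?P (f x)} = card {y\<in>cube digits. ?P y}"
  proof (rule count_mod_transfer[OF residue_system_digits residue_system_digits,
        where h = "\<lambda>(a, b, c). (a - b - c, b, c)"])
    show "invariant_mod 1 ?P"
      using invariant_mod_ternary_Suc[OF u_in_vring v_in_vring, of 0 1] by (simp add: numeral_2_eq_2)
    show "cong3 1 (f x) (f y)" if "cong3 1 x y" for x y
      using that cong3_linear[OF _ vring_one vring_one vring_one]
      by (cases x, cases y) (simp add: f_def)
    show "cong3 1 ((\<lambda>(a, b, c). (a - b - c, b, c)) x) ((\<lambda>(a, b, c). (a - b - c, b, c)) y)"
      if "cong3 1 x y" for x y
      using that cong3_linear[of 1 _ _ _ _ _ _ 1 "-1" "-1"]
      by (cases x, cases y) (simp add: algebra_simps)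
  qed (auto simp: f_def)
  then have "count_mod 1 ?P = card {x\<in>cube digits. ?P (f x)}"
    by (simp add: count_mod_def)
  also have "{x\<in>cube digits. ?P (f x)} = (\<lambda>g. (1, fst g, snd g)) ` {g\<in>digits \<times> digits. ?C g}"
  proof -
    have "?P (f (a, b, c)) \<longleftrightarrow> a = 1 \<and> ?C (b, c)" if "a \<in> digits" "b \<in> digits" "c \<in> digits" for a b c
      using that ternary_one_mod_4_iff[of a b c] digit_in_vring digits_unique[of a 1] one_in_digits
      by (auto simp: f_def)
    then show ?thesis
      using one_in_digits by (auto simp: cube_def image_iff)
  qed
  also have "card \<dots> = card {g\<in>digits \<times> digits. ?C g}"
    by (rule card_image) (auto simp: inj_on_def)
  finally show ?thesis .
qed

lemma card_binary_minus_linear: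
  "card {g \<in> digits \<times> digits. binary u v (fst g) (snd g) - fst g - snd g \<in> \<I> 1} =
    rep_count (- binary u v 1 1)"
proof -
  let ?C = "\<lambda>g. binary u v (fst g) (snd g) - fst g - snd g \<in> \<I> 1"
  have "card {g\<in>digits \<times> digits. ?C g} = card {g\<in>digits \<times> digits. ?C ((\<lambda>(a, b). (a + 1, b + 1)) g)}"
  proof (rule sym, rule card_digit_pairs_transfer[where h = "\<lambda>(a, b). (a - 1, b - 1)"])
    show "?C x = ?C y" if "x \<in> \<O> \<times> \<O>" "y \<in> \<O> \<times> \<O>" "cong_pair x y" for x y
    proof -
      have b: "binary u v (fst x) (snd x) - binary u v (fst y) (snd y) \<in> \<I> 1"
        using that binary_cong by (auto simp: cong_pair_def)
      have d: "fst x - fst y \<in> \<I> 1" "snd x - snd y \<in> \<I> 1"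
        using that(3) by (auto simp: cong_pair_def)
      have "(binary u v (fst x) (snd x) - binary u v (fst y) (snd y)) - (fst x - fst y) - (snd x - snd y)
          \<in> \<I> 1"
        using ideal_diff[OF ideal_diff[OF b d(1)] d(2)] .
      moreover have eq: "(binary u v (fst x) (snd x) - fst x - snd x) - (binary u v (fst y) (snd y) - fst y - snd y)
          = (binary u v (fst x) (snd x) - binary u v (fst y) (snd y)) - (fst x - fst y) - (snd x - snd y)"
        by simp
      ultimately show ?thesis
        by (intro ideal_cong_iff) (simp only: eq)
    qed
  qed (auto simp: cong_pair_def)
  also have "\<dots> = rep_count (- binary u v 1 1)"
  proof -
    have "?C ((\<lambda>(a, b). (a + 1, b + 1)) g) \<longleftrightarrow> binary u v (fst g) (snd g) - (- binary u v 1 1) \<in> \<I> 1"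
      if g_digits: "g \<in> digits \<times> digits" for g
    proof -
      obtain a b where g: "g = (a, b)" "a \<in> \<O>" "b \<in> \<O>"
        using g_digits digit_in_vring by (cases g) auto
      define W where "W = u * a + v * b - a - b - 1"
      have "W \<in> \<O>"
        using g by (simp add: W_def)
      have "binary u v (a + 1) (b + 1) - (a + 1) - (b + 1) = (binary u v a b - (- binary u v 1 1)) + 2 * W"
        by (simp add: W_def binary_def algebra_simps power2_eq_square)
      then have "(binary u v (a + 1) (b + 1) - (a + 1) - (b + 1)) - (binary u v a b - (- binary u v 1 1)) \<in> \<I> 1"
        using two_mult_in_ideal[OF \<open>W \<in> \<O>\<close>] by (simp only: add_diff_cancel_left')
      then show ?thesis
        unfolding g(1) by (simp only: prod.case fst_conv snd_conv) (rule ideal_cong_iff)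
    qed
    then show ?thesis
      unfolding rep_count_def by (intro arg_cong[where f = card]) auto
  qed
  finally show ?thesis .
qed

lemma count_mod_one_mod_4: "count_mod 1 (\<lambda>x. B x - 1 \<in> \<I> 2) = q + 1"
proof -
  have "binary u v 1 1 \<notin> \<I> 1"
    using binary_in_ideal_1_imp[of 1 1] by auto
  moreover have "- binary u v 1 1 \<in> \<O>"
    by (simp add: binary_def)
  ultimately have "is_unit_v val (- binary u v 1 1)"
    by (simp add: is_unit_v_iff)
  then show ?thesis
    by (simp only: count_mod_one_mod_4_eq_card card_binary_minus_linear rep_count_unit rep_count_one)
qed

end

context dyadic_field
begin

section \<open>Hensel lifting of \<open>B(x) \<equiv> 1\<close>\<close>

lemma invariant_mod_linear_plus_square:
  assumes p: "p0 \<in> \<O>" "p1 \<in> \<O>" "p2 \<in> \<O>"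
  shows "invariant_mod 1 (\<lambda>e. case e of (e0, e1, e2) \<Rightarrow>
      c + p0 * e0 + p1 * e1 + p2 * e2 + (e0 + e1 + e2) ^ 2 \<in> \<I> 1)"
proof (rule invariant_modI)
  fix a b d a' b' d' :: 'k
  assume O: "a \<in> \<O>" "b \<in> \<O>" "d \<in> \<O>" "a' \<in> \<O>" "b' \<in> \<O>" "d' \<in> \<O>"
    and cong: "a - a' \<in> \<I> 1" "b - b' \<in> \<I> 1" "d - d' \<in> \<I> 1"
  have "(a + b + d) - (a' + b' + d') \<in> \<I> 1"
    using cong3_linear[OF _ vring_one vring_one vring_one, of 1 a b d a' b' d'] cong by simp
  then have sq: "(a + b + d) ^ 2 - (a' + b' + d') ^ 2 \<in> \<I> 1"
    using O by (intro square_diff_in_ideal) auto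
  have lin: "(p0 * a + p1 * b + p2 * d) - (p0 * a' + p1 * b' + p2 * d') \<in> \<I> 1"
    using cong3_linear[of 1 a b d a' b' d' p0 p1 p2] cong p by simp
  have "(c + p0 * a + p1 * b + p2 * d + (a + b + d) ^ 2)
      - (c + p0 * a' + p1 * b' + p2 * d' + (a' + b' + d') ^ 2)
      = ((p0 * a + p1 * b + p2 * d) - (p0 * a' + p1 * b' + p2 * d'))
        + ((a + b + d) ^ 2 - (a' + b' + d') ^ 2)"
    by (simp add: algebra_simps)
  then have "(c + p0 * a + p1 * b + p2 * d + (a + b + d) ^ 2)
      - (c + p0 * a' + p1 * b' + p2 * d' + (a' + b' + d') ^ 2) \<in> \<I> 1"
    using ideal_add[OF lin sq] by (simp only:)
  then show "(case (a, b, d) of (e0, e1, e2) \<Rightarrow> c + p0 * e0 + p1 * e1 + p2 * e2 + (e0 + e1 + e2) ^ 2 \<in> \<I> 1)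
      = (case (a', b', d') of (e0, e1, e2) \<Rightarrow> c + p0 * e0 + p1 * e1 + p2 * e2 + (e0 + e1 + e2) ^ 2 \<in> \<I> 1)"
    by (simp only: prod.case) (rule ideal_cong_iff)
qed

text \<open>Replacing \<open>e\<^sub>2\<close> by \<open>e\<^sub>0 + e\<^sub>1 + e\<^sub>2\<close> makes the condition linear in \<open>e\<^sub>0\<close> with unit coefficient \<open>p\<^sub>0 - p\<^sub>2\<close>.\<close>

lemma card_linear_plus_square:
  assumes p: "c \<in> \<O>" "p0 \<in> \<O>" "p1 \<in> \<O>" "p2 \<in> \<O>" and unit: "is_unit_v val (p0 - p2)"
  shows "card {e \<in> cube digits. (case e of (e0, e1, e2) \<Rightarrow>
      c + p0 * e0 + p1 * e1 + p2 * e2 + (e0 + e1 + e2) ^ 2 \<in> \<I> 1)} = q ^ 2"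
    (is "card {e \<in> cube digits. ?P e} = _")
proof -
  define f where "f e = (case e of (e0, e1, e2) \<Rightarrow> (e0, e1, e2 - e0 - e1))" for e :: "'k \<times> 'k \<times> 'k"
  have "card {e \<in> cube digits. ?P (f e)} = card {e \<in> cube digits. ?P e}"
  proof (rule count_mod_transfer[OF residue_system_digits residue_system_digits
        _ _ _ _ _ _ invariant_mod_linear_plus_square[OF p(2-4)],
        where h = "\<lambda>(e0, e1, e2). (e0, e1, e0 + e1 + e2)"])
    show "cong3 1 (f x) (f y)" if "cong3 1 x y" for x y
      using that cong3_linear[of 1 _ _ _ _ _ _ "-1" "-1" 1]
      by (cases x, cases y) (simp add: f_def algebra_simps)
    show "cong3 1 ((\<lambda>(e0, e1, e2). (e0, e1, e0 + e1 + e2)) x) ((\<lambda>(e0, e1, e2). (e0, e1, e0 + e1 + e2)) y)"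
      if "cong3 1 x y" for x y
      using that cong3_linear[OF _ vring_one vring_one vring_one]
      by (cases x, cases y) simp
  qed (auto simp: f_def)
  moreover have "card {e \<in> cube digits. ?P (f e)} = q ^ 2"
  proof (rule card_cube_digits_unique)
    fix b d assume "b \<in> digits" "d \<in> digits"
    then have "c + (p1 - p2) * b + p2 * d + d ^ 2 \<in> \<O>"
      using p digit_in_vring by simp
    from ex1_digit_linear[OF unit this]
    show "\<exists>!a. a \<in> digits \<and> ?P (f (a, b, d))"
      by (simp add: f_def algebra_simps power2_eq_square)
  qed
  ultimately show ?thesis
    by simp
qed

definition polar :: "'k \<Rightarrow> 'k \<Rightarrow> 'k \<times> 'k \<times> 'k \<Rightarrow> 'k \<times> 'k \<times> 'k \<Rightarrow> 'k" where
  "polar u v x y = (case (x, y) of ((a, b, c), (a', b', c')) \<Rightarrow>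
     a * a' - (1 + 2 * u) * (b * b') - (1 + 2 * v) * (c * c'))"

lemma polar_simp [simp]:
  "polar u v (a, b, c) (a', b', c') = a * a' - (1 + 2 * u) * (b * b') - (1 + 2 * v) * (c * c')"
  by (simp add: polar_def)

lemma ternary_shift3:
  "ternary u v (shift3 j p e) = ternary u v p + 2 * 2 ^ j * polar u v p e + (2 ^ j) ^ 2 * ternary u v e"
  by (cases p, cases e) (simp add: algebra_simps power2_eq_square)

end

context dyadic_form
begin

lemma ternary_one_mod_4_not_all_cong:
  assumes p: "p0 \<in> \<O>" "p1 \<in> \<O>" "p2 \<in> \<O>" and cong: "p1 - p0 \<in> \<I> 1" "p2 - p0 \<in> \<I> 1"
  shows "B (p0, p1, p2) - 1 \<notin> \<I> 2"
proof
  assume "B (p0, p1, p2) - 1 \<in> \<I> 2"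
  then have "B ((p0 - p1 - p2) + p1 + p2, p1, p2) - 1 \<in> \<I> 2"
    by simp
  moreover have "p0 - p1 - p2 \<in> \<O>"
    using p by simp
  ultimately have a: "(p0 - p1 - p2) - 1 \<in> \<I> 1" and bc: "binary u v p1 p2 - p1 - p2 \<in> \<I> 1"
    using ternary_one_mod_4_iff[of "p0 - p1 - p2" p1 p2] p by blast+
  have "(p0 - p1 - p2 - 1) + (p1 - p0) + (p2 - p0) + 2 * p0 \<in> \<I> 1"
    using a cong two_mult_in_ideal[OF p(1)] by (intro ideal_add)
  then have p0: "p0 - 1 \<in> \<I> 1"
    by (simp add: algebra_simps)
  have p12: "p1 - 1 \<in> \<I> 1" "p2 - 1 \<in> \<I> 1"
    using ideal_trans[OF cong(1) p0] ideal_trans[OF cong(2) p0] .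
  have "binary u v p1 p2 - binary u v 1 1 \<in> \<I> 1"
    using binary_cong[OF p(2,3) vring_one vring_one p12] .
  then have "(binary u v p1 p2 - p1 - p2) - (binary u v p1 p2 - binary u v 1 1) + (p1 - 1) + (p2 - 1) + 2
      \<in> \<I> 1"
    using ideal_add[OF ideal_add[OF ideal_add[OF ideal_diff[OF bc] p12(1)] p12(2)] two_in_ideal] by blast
  then have "binary u v 1 1 \<in> \<I> 1"
    by (simp add: algebra_simps)
  then show False
    using binary_in_ideal_1_imp[of 1 1] by simp
qed

text \<open>Modulo \<open>2\<close>, \<open>polar u v p e \<equiv> \<Sum> p\<^sub>i e\<^sub>i\<close> and \<open>B e \<equiv> (e\<^sub>0 + e\<^sub>1 + e\<^sub>2)\<^sup>2\<close>.\<close>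

lemma lift_mod_8_iff:
  assumes "p0 \<in> \<O>" "p1 \<in> \<O>" "p2 \<in> \<O>" "e0 \<in> \<O>" "e1 \<in> \<O>" "e2 \<in> \<O>"
    and c: "B (p0, p1, p2) - 1 = 4 * c"
  shows "B (shift3 1 (p0, p1, p2) (e0, e1, e2)) - 1 \<in> \<I> 3 \<longleftrightarrow>
    c + p0 * e0 + p1 * e1 + p2 * e2 + (e0 + e1 + e2) ^ 2 \<in> \<I> 1"
proof -
  let ?p = "(p0, p1, p2)" and ?e = "(e0, e1, e2)"
  define W where "W = - (1 + u) * (p1 * e1) - (1 + v) * (p2 * e2) - (1 + u) * e1 ^ 2 - (1 + v) * e2 ^ 2
    - e0 * e1 - e0 * e2 - e1 * e2"
  have "B (shift3 1 ?p ?e) - 1 = 4 * (c + polar u v ?p ?e + B ?e)"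
    using c by (simp only: ternary_shift3) (simp add: algebra_simps)
  then have "B (shift3 1 ?p ?e) - 1 \<in> \<I> 3 \<longleftrightarrow> c + polar u v ?p ?e + B ?e \<in> \<I> 1"
    by (simp only: four_mult_ideal_3_iff)
  also have "\<dots> \<longleftrightarrow> c + p0 * e0 + p1 * e1 + p2 * e2 + (e0 + e1 + e2) ^ 2 \<in> \<I> 1"
  proof (rule ideal_cong_iff)
    have "W \<in> \<O>"
      using assms by (simp add: W_def)
    moreover have "(c + polar u v ?p ?e + B ?e) - (c + p0 * e0 + p1 * e1 + p2 * e2 + (e0 + e1 + e2) ^ 2) = 2 * W"
      by (simp add: W_def algebra_simps power2_eq_square)
    ultimately show "(c + polar u v ?p ?e + B ?e) - (c + p0 * e0 + p1 * e1 + p2 * e2 + (e0 + e1 + e2) ^ 2) \<in> \<I> 1"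
      using two_mult_in_ideal by simp
  qed
  finally show ?thesis .
qed

text \<open>By \<open>ternary_one_mod_4_not_all_cong\<close> the \<open>p\<^sub>i\<close> do not all agree modulo \<open>2\<close>, so
  \<open>card_linear_plus_square\<close> applies, possibly after exchanging \<open>e\<^sub>1\<close> and \<open>e\<^sub>2\<close>.\<close>

lemma card_lift_mod_8:
  assumes p: "p \<in> cube digits" and B: "B p - 1 \<in> \<I> 2"
  shows "card {e \<in> cube digits. B (shift3 1 p e) - 1 \<in> \<I> 3} = q ^ 2"
proof -
  obtain p0 p1 p2 where p_def: "p = (p0, p1, p2)" and pO: "p0 \<in> \<O>" "p1 \<in> \<O>" "p2 \<in> \<O>"
    using p digit_in_vring by (cases p) auto
  obtain c where c: "c \<in> \<O>" "B p - 1 = 4 * c"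
    using B mem_ideal_two_power_iff[of _ 2] by auto
  let ?Q = "\<lambda>e. case e of (e0, e1, e2) \<Rightarrow> c + p0 * e0 + p1 * e1 + p2 * e2 + (e0 + e1 + e2) ^ 2 \<in> \<I> 1"
  have "B (shift3 1 p e) - 1 \<in> \<I> 3 \<longleftrightarrow> ?Q e" if "e \<in> cube digits" for e
    using that digit_in_vring lift_mod_8_iff[OF pO] c(2) unfolding p_def by (cases e) auto
  then have "card {e \<in> cube digits. B (shift3 1 p e) - 1 \<in> \<I> 3} = card {e \<in> cube digits. ?Q e}"
    by (intro arg_cong[where f = card] Collect_cong) blast
  also have "\<dots> = q ^ 2"
  proof (cases "is_unit_v val (p0 - p2)")
    case True
    then show ?thesis
      using card_linear_plus_square[OF c(1) pO] by simp
  next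
    case not_unit: False
    have "is_unit_v val (p0 - p1)"
    proof (rule ccontr)
      assume "\<not> is_unit_v val (p0 - p1)"
      then have "p0 - p1 \<in> \<I> 1" "p0 - p2 \<in> \<I> 1"
        using not_unit pO by (auto simp: is_unit_v_iff)
      then have "p1 - p0 \<in> \<I> 1" "p2 - p0 \<in> \<I> 1"
        by (auto intro: ideal_sym)
      then show False
        using ternary_one_mod_4_not_all_cong[OF pO] B by (simp add: p_def)
    qed
    moreover have "?Q ((\<lambda>(e0, e1, e2). (e0, e2, e1)) e) \<longleftrightarrow>
        (case e of (e0, e1, e2) \<Rightarrow> c + p0 * e0 + p2 * e1 + p1 * e2 + (e0 + e1 + e2) ^ 2 \<in> \<I> 1)" for e
      by (cases e) (simp add: add_ac)
    ultimately have "card {e \<in> cube digits. ?Q ((\<lambda>(e0, e1, e2). (e0, e2, e1)) e)} = q ^ 2"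
      using card_linear_plus_square[OF c(1) pO(1,3,2)] by simp
    then show ?thesis
      by (subst (asm) card_filter_involution) auto
  qed
  finally show ?thesis .
qed

lemma lift_iff:
  assumes p: "p \<in> cube \<O>" and e: "e \<in> cube \<O>" and c: "B p - 1 = 2 ^ Suc (Suc (Suc k)) * c"
  shows "B (shift3 (Suc (Suc k)) p e) - 1 \<in> \<I> (Suc (Suc (Suc (Suc k)))) \<longleftrightarrow> c + polar u v p e \<in> \<I> 1"
proof -
  have "B e \<in> \<O>"
    using e by (cases e) simp
  have "B (shift3 (Suc (Suc k)) p e) - 1 = 2 ^ Suc (Suc (Suc k)) * (c + polar u v p e)
      + 2 ^ Suc (Suc (Suc (Suc k))) * (2 ^ k * B e)"
    using c by (simp add: ternary_shift3 algebra_simps power2_eq_square)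
  moreover have "2 ^ Suc (Suc (Suc (Suc k))) * (2 ^ k * B e) \<in> \<I> (Suc (Suc (Suc (Suc k))))"
    using \<open>B e \<in> \<O>\<close> by (intro two_power_mult_in_ideal) simp
  ultimately have "B (shift3 (Suc (Suc k)) p e) - 1 \<in> \<I> (Suc (Suc (Suc (Suc k)))) \<longleftrightarrow>
      2 ^ Suc (Suc (Suc k)) * (c + polar u v p e) \<in> \<I> (Suc (Suc (Suc (Suc k))))"
    by (intro ideal_cong_iff) simp
  also have "\<dots> \<longleftrightarrow> c + polar u v p e \<in> \<I> 1"
    using two_power_mult_ideal_iff[of "Suc (Suc (Suc k))" "c + polar u v p e" 1] by simp
  finally show ?thesis .
qed

lemma card_lift:
  assumes p: "p \<in> cube (reps (Suc (Suc k)))" and B: "B p - 1 \<in> \<I> (Suc (Suc (Suc k)))"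
  shows "card {e \<in> cube digits. B (shift3 (Suc (Suc k)) p e) - 1 \<in> \<I> (Suc (Suc (Suc (Suc k))))} = q ^ 2"
proof -
  obtain p0 p1 p2 where p_def: "p = (p0, p1, p2)" and pO: "p0 \<in> \<O>" "p1 \<in> \<O>" "p2 \<in> \<O>"
    using cube_reps_subset[OF p] by (cases p) auto
  obtain c where c: "c \<in> \<O>" "B p - 1 = 2 ^ Suc (Suc (Suc k)) * c"
    using B mem_ideal_two_power_iff by blast
  have "e \<in> cube digits \<Longrightarrow> e \<in> cube \<O>" for e
    using digits_subset_vring by (cases e) auto
  note lift = lift_iff[OF cube_reps_subset[OF p] this c(2)]
  then have "card {e \<in> cube digits. B (shift3 (Suc (Suc k)) p e) - 1 \<in> \<I> (Suc (Suc (Suc (Suc k))))}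
      = card {e \<in> cube digits. (case e of (e0, e1, e2) \<Rightarrow>
          c + p0 * e0 + (- (1 + 2 * u) * p1) * e1 + (- (1 + 2 * v) * p2) * e2 \<in> \<I> 1)}"
    by (intro arg_cong[where f = card] Collect_cong) (auto simp: p_def algebra_simps)
  also have "\<dots> = q ^ 2"
  proof (rule card_linear_mod_2)
    have "\<not> (p0 \<in> \<I> 1 \<and> p1 \<in> \<I> 1 \<and> p2 \<in> \<I> 1)"
    proof
      assume "p0 \<in> \<I> 1 \<and> p1 \<in> \<I> 1 \<and> p2 \<in> \<I> 1"
      then have "B p \<in> \<I> 1"
        using ternary_in_ideal_2[of u v p0 p1 p2] ideal_antimono[of 1 2] by (simp add: p_def)
      moreover have "B p - 1 \<in> \<I> 1"
        using B ideal_antimono[of 1 "Suc (Suc (Suc k))"] by simp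
      ultimately have "B p - (B p - 1) \<in> \<I> 1"
        by (rule ideal_diff)
      then show False
        by simp
    qed
    then show "is_unit_v val p0 \<or> is_unit_v val (- (1 + 2 * u) * p1) \<or> is_unit_v val (- (1 + 2 * v) * p2)"
      using pO is_unit_v_mult[OF is_unit_v_minus[OF is_unit_v_one_plus_two]]
      by (auto simp: is_unit_v_iff)
  qed (use c pO in simp_all)
  finally show ?thesis .
qed

lemma ternary_shift3_cong:
  assumes p: "p \<in> cube \<O>" and e: "e \<in> cube \<O>"
  shows "B (shift3 (Suc k) p e) - B p \<in> \<I> (Suc (Suc k))"
proof -
  obtain p0 p1 p2 e0 e1 e2 where pe: "p = (p0, p1, p2)" "e = (e0, e1, e2)"
    by (cases p, cases e) auto
  have O: "p0 \<in> \<O>" "p1 \<in> \<O>" "p2 \<in> \<O>" "e0 \<in> \<O>" "e1 \<in> \<O>" "e2 \<in> \<O>"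
    using p e pe by auto
  show ?thesis
    unfolding pe shift3_simp
    by (rule ternary_diff_in_ideal[OF u_in_vring v_in_vring _ _ _ O(1-3) square_diff_in_ideal_Suc])
      (use O two_power_mult_in_ideal[of _ "Suc k"] in simp_all)
qed

lemma count_mod_one_lift:
  "count_mod (Suc (Suc k)) (\<lambda>x. B x - 1 \<in> \<I> (Suc (Suc (Suc k))))
     = q ^ 2 * count_mod (Suc k) (\<lambda>x. B x - 1 \<in> \<I> (Suc (Suc k)))"
proof -
  let ?P = "\<lambda>x. B x - 1 \<in> \<I> (Suc (Suc (Suc k)))"
  let ?P' = "\<lambda>x. B x - 1 \<in> \<I> (Suc (Suc k))"
  have inner: "card {e \<in> cube digits. ?P (shift3 (Suc k) p e)} = (if ?P' p then q ^ 2 else 0)"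
    if p: "p \<in> cube (reps (Suc k))" for p
  proof (cases "?P' p")
    case False
    have "\<not> ?P (shift3 (Suc k) p e)" if e: "e \<in> cube digits" for e
    proof
      assume "?P (shift3 (Suc k) p e)"
      then have "B (shift3 (Suc k) p e) - 1 \<in> \<I> (Suc (Suc k))"
        using ideal_antimono[of "Suc (Suc k)" "Suc (Suc (Suc k))"] by simp
      moreover have "B (shift3 (Suc k) p e) - B p \<in> \<I> (Suc (Suc k))"
        using cube_reps_subset[OF p] cube_reps_subset[of e 1] e by (intro ternary_shift3_cong) simp_all
      ultimately have "B p - 1 \<in> \<I> (Suc (Suc k))"
        using ideal_cong_diff_iff by blast
      then show False
        using False by simp
    qed
    then have no_lift: "{e \<in> cube digits. ?P (shift3 (Suc k) p e)} = {}"
      by blast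
    show ?thesis
      unfolding no_lift using False by simp
  next
    case True
    show ?thesis
    proof (cases k)
      case 0
      then show ?thesis
        using card_lift_mod_8[of p] p True by (simp add: numeral_2_eq_2 numeral_3_eq_3)
    next
      case (Suc k')
      then show ?thesis
        using card_lift[of p k'] p True by simp
    qed
  qed
  have "count_mod (Suc k + 1) ?P = (\<Sum>p\<in>cube (reps (Suc k)). card {e \<in> cube digits. ?P (shift3 (Suc k) p e)})"
    using count_mod_decomp[where j = "Suc k" and k = 1, OF invariant_mod_mono[OF invariant_mod_ternary_Suc]]
    by simp
  also have "\<dots> = (\<Sum>p\<in>cube (reps (Suc k)). if ?P' p then q ^ 2 else 0)"
    using inner by simp
  also have "\<dots> = q ^ 2 * count_mod (Suc k) ?P'"
    by (simp add: sum.inter_filter[OF finite_cube_reps, symmetric] count_mod_def)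
  finally show ?thesis
    by simp
qed

lemma count_mod_one:
  "count_mod (Suc (Suc l)) (\<lambda>x. B x - 1 \<in> \<I> (Suc (Suc l))) = q ^ 3 * (q + 1) * q ^ (2 * l)"
proof (induction l)
  case 0
  let ?P = "\<lambda>x. B x - 1 \<in> \<I> (Suc (Suc 0))"
  have "count_mod (Suc 0 + 1) ?P = q ^ (3 * 1) * count_mod (Suc 0) ?P"
    by (rule count_mod_refine[OF invariant_mod_ternary_Suc[OF u_in_vring v_in_vring]])
  moreover have "count_mod (Suc 0) ?P = q + 1"
    using count_mod_one_mod_4 by (simp only: numeral_2_eq_2 One_nat_def)
  ultimately show ?case
    by simp
next
  case (Suc l)
  let ?P = "\<lambda>m x. B x - 1 \<in> \<I> m"
  have refine3: "count_mod (Suc (Suc (Suc l))) (?P (Suc (Suc (Suc l))))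
      = q ^ 3 * count_mod (Suc (Suc l)) (?P (Suc (Suc (Suc l))))"
    using count_mod_refine[OF invariant_mod_ternary_Suc[of u v "Suc l" 1], of 1] by simp
  have refine2: "count_mod (Suc (Suc l)) (?P (Suc (Suc l))) = q ^ 3 * count_mod (Suc l) (?P (Suc (Suc l)))"
    using count_mod_refine[OF invariant_mod_ternary_Suc[of u v l 1], of 1] by simp
  have "count_mod (Suc (Suc (Suc l))) (?P (Suc (Suc (Suc l))))
      = q ^ 3 * (q ^ 2 * count_mod (Suc l) (?P (Suc (Suc l))))"
    using refine3 count_mod_one_lift[of l] by simp
  also have "\<dots> = q ^ 2 * count_mod (Suc (Suc l)) (?P (Suc (Suc l)))"
    using refine2 by (simp only: mult.left_commute)
  also have "\<dots> = q ^ 2 * (q ^ 3 * (q + 1) * q ^ (2 * l))"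
    using Suc.IH by simp
  also have "\<dots> = q ^ 3 * (q + 1) * (q ^ 2 * q ^ (2 * l))"
    by (simp only: mult_ac)
  also have "q ^ 2 * q ^ (2 * l) = q ^ (2 * Suc l)"
    by (simp add: power_add[symmetric])
  finally show ?case .
qed

end

section \<open>The generating series\<close>

definition closed_form :: "complex \<Rightarrow> complex \<Rightarrow> nat \<Rightarrow> complex" where
  "closed_form Q w T = (1 / Q) * (1 + w / Q) / (1 - w ^ 2 / Q)
     + (1 / Q) * w ^ (2 * T + 1) * (1 / Q) ^ T * (1 - w ^ 2 / Q ^ 2) / ((1 - w) * (1 - w ^ 2 / Q))"

lemma divide_add_divide_cancel:
  fixes P D E M w :: "'a::field"
  assumes E: "E \<noteq> 0" and D: "D \<noteq> 0" and sum: "E + w * M = D"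
  shows "P / D + P * w * M / (E * D) = P / E"
proof -
  have "P / D + P * w * M / (E * D) = (P * E + P * w * M) / (E * D)"
    using E D by (simp add: field_simps)
  also have "P * E + P * w * M = P * D"
    unfolding sum[symmetric] by (simp add: algebra_simps)
  also have "P * D / (E * D) = P / E"
    using D by simp
  finally show ?thesis .
qed

lemma closed_form_0:
  fixes Q w :: complex
  assumes Q: "Q \<noteq> 0" and E: "1 - w \<noteq> 0" and D: "1 - w ^ 2 / Q \<noteq> 0"
  shows "closed_form Q w 0 = (1 / Q) * (1 + w / Q) / (1 - w)"
proof -
  have f: "1 - w ^ 2 / Q ^ 2 = (1 + w / Q) * (1 - w / Q)"
    using Q by (simp add: field_simps power2_eq_square)
  have g: "(1 - w) + w * (1 - w / Q) = 1 - w ^ 2 / Q"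
    using Q by (simp add: field_simps power2_eq_square)
  have "closed_form Q w 0 = ((1 / Q) * (1 + w / Q)) / (1 - w ^ 2 / Q)
      + ((1 / Q) * (1 + w / Q)) * w * (1 - w / Q) / ((1 - w) * (1 - w ^ 2 / Q))"
    unfolding closed_form_def f by (simp add: mult_ac)
  also have "\<dots> = ((1 / Q) * (1 + w / Q)) / (1 - w)"
    by (rule divide_add_divide_cancel[OF E D g])
  finally show ?thesis .
qed

lemma closed_form_Suc:
  fixes Q w :: complex
  assumes Q: "Q \<noteq> 0" and D: "1 - w ^ 2 / Q \<noteq> 0"
  shows "closed_form Q w (Suc T) = 1 / Q + w / Q ^ 2 + (w ^ 2 / Q) * closed_form Q w T"
proof -
  define A where "A = (1 / Q) * (1 + w / Q) / (1 - w ^ 2 / Q)"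
  define C where "C = (1 / Q) * (1 - w ^ 2 / Q ^ 2) / ((1 - w) * (1 - w ^ 2 / Q))"
  have closed: "closed_form Q w T' = A + C * (w ^ (2 * T' + 1) * (1 / Q) ^ T')" for T'
    unfolding closed_form_def A_def C_def by (simp add: mult_ac)
  have "A * (1 - w ^ 2 / Q) = (1 / Q) * (1 + w / Q)"
    unfolding A_def using D by simp
  then have "A = (1 / Q) * (1 + w / Q) + (w ^ 2 / Q) * A"
    by (simp add: algebra_simps)
  also have "(1 / Q) * (1 + w / Q) = 1 / Q + w / Q ^ 2"
    using Q by (simp add: field_simps power2_eq_square)
  finally have A: "A = 1 / Q + w / Q ^ 2 + (w ^ 2 / Q) * A" .
  have p: "w ^ (2 * Suc T + 1) * (1 / Q) ^ Suc T = (w ^ 2 / Q) * (w ^ (2 * T + 1) * (1 / Q) ^ T)"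
    by (simp add: power2_eq_square field_simps)
  show ?thesis
    unfolding closed p using A by (simp add: algebra_simps)
qed

lemma closed_form_denominators:
  fixes q :: nat and z :: complex
  assumes q: "2 \<le> q" and z: "norm z < 1"
  defines "Q \<equiv> complex_of_real (real q)"
  shows "Q \<noteq> 0" "norm (z / Q) < 1" "1 - z / Q \<noteq> 0" "1 - (z / Q) ^ 2 / Q \<noteq> 0"
proof -
  show "Q \<noteq> 0"
    using q by (simp add: Q_def)
  have norm_Q: "norm Q = real q"
    by (simp add: Q_def)
  have "norm (z / Q) = norm z / real q"
    by (simp add: norm_divide norm_Q)
  also have "\<dots> < 1"
    using z q by (simp add: divide_less_eq)
  finally show w: "norm (z / Q) < 1" .
  then show "1 - z / Q \<noteq> 0"
    by auto
  have "norm ((z / Q) ^ 2 / Q) = norm (z / Q) ^ 2 / real q"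
    by (simp add: norm_divide norm_power norm_Q)
  also have "\<dots> \<le> norm (z / Q) ^ 2"
  proof -
    have "norm (z / Q) ^ 2 * 1 \<le> norm (z / Q) ^ 2 * real q"
      by (rule mult_left_mono) (use q in auto)
    then show ?thesis
      using q by (simp add: divide_le_eq)
  qed
  also have "\<dots> < 1"
    using w by (simp add: power_less_one_iff)
  finally show "1 - (z / Q) ^ 2 / Q \<noteq> 0"
    by auto
qed

lemma sums_closed_form_0:
  fixes q :: nat and z :: complex and x :: "nat \<Rightarrow> real"
  assumes q: "2 \<le> q" and z: "norm z < 1"
    and x: "x 0 = 1 / real q" "\<And>l. x (Suc l) = (real q + 1) / real q ^ (l + 3)"
  shows "(\<lambda>l. z ^ l * complex_of_real (x l)) sums closed_form (of_real (real q)) (z / of_real (real q)) 0"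
proof -
  define Q where "Q = complex_of_real (real q)"
  define w where "w = z / Q"
  note den = closed_form_denominators[OF q z, folded Q_def w_def]
  define c where "c = z * (Q + 1) / Q ^ 3"
  have "(\<lambda>l. z ^ Suc l * complex_of_real (x (Suc l))) = (\<lambda>l. c * w ^ l)"
  proof
    fix l
    have X: "complex_of_real (x (Suc l)) = (Q + 1) / Q ^ (l + 3)"
      unfolding x(2) Q_def by simp
    show "z ^ Suc l * complex_of_real (x (Suc l)) = c * w ^ l"
      unfolding X c_def w_def using den(1) by (simp add: power_divide power_add field_simps)
  qed
  moreover have "(\<lambda>l. c * w ^ l) sums (c * (1 / (1 - w)))"
    by (rule sums_mult) (rule geometric_sums[OF den(2)])
  ultimately have "(\<lambda>l. z ^ l * complex_of_real (x l)) sums (c * (1 / (1 - w)) + z ^ 0 * complex_of_real (x 0))"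
    by (subst sums_Suc_iff[symmetric]) simp
  moreover have "c * (1 / (1 - w)) + z ^ 0 * complex_of_real (x 0) = (1 / Q) * (1 + w / Q) / (1 - w)"
  proof -
    have "z = w * Q" "complex_of_real (x 0) = 1 / Q"
      unfolding w_def x(1) Q_def using den(1) by (simp_all add: Q_def)
    then show ?thesis
      unfolding c_def using den(1,3) by (simp add: field_simps power3_eq_cube)
  qed
  ultimately show ?thesis
    using closed_form_0[OF den(1,3,4)] by (simp add: Q_def w_def)
qed

lemma sums_closed_form_Suc:
  fixes q :: nat and z :: complex and x x' :: "nat \<Rightarrow> real"
  assumes q: "2 \<le> q" and z: "norm z < 1"
    and x': "(\<lambda>l. z ^ l * complex_of_real (x' l)) sums closed_form (of_real (real q)) (z / of_real (real q)) T"
    and x: "x 0 = 1 / real q" "x 1 = 1 / real q ^ 3" "\<And>l. x (Suc (Suc l)) = x' l / real q ^ 3"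
  shows "(\<lambda>l. z ^ l * complex_of_real (x l)) sums closed_form (of_real (real q)) (z / of_real (real q)) (Suc T)"
proof -
  define Q where "Q = complex_of_real (real q)"
  define w where "w = z / Q"
  note den = closed_form_denominators[OF q z, folded Q_def w_def]
  define f where "f l = z ^ l * complex_of_real (x l)" for l
  define c where "c = z ^ 2 / Q ^ 3"
  have "(\<lambda>l. f (Suc (Suc l))) = (\<lambda>l. c * (z ^ l * complex_of_real (x' l)))"
  proof
    fix l
    have X: "complex_of_real (x (Suc (Suc l))) = complex_of_real (x' l) / Q ^ 3"
      unfolding x(3) Q_def by simp
    show "f (Suc (Suc l)) = c * (z ^ l * complex_of_real (x' l))"
      unfolding f_def X c_def using den(1) by (simp add: field_simps power2_eq_square)
  qed
  moreover have "(\<lambda>l. c * (z ^ l * complex_of_real (x' l))) sums (c * closed_form Q w T)"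
    by (rule sums_mult) (use x' in \<open>simp add: Q_def w_def\<close>)
  ultimately have "(\<lambda>l. f (Suc (Suc l))) sums (c * closed_form Q w T)"
    by simp
  then have "(\<lambda>l. f (Suc l)) sums (c * closed_form Q w T + f (Suc 0))"
    using sums_Suc_iff[of "\<lambda>n. f (Suc n)" "c * closed_form Q w T"] by simp
  then have "f sums (c * closed_form Q w T + f (Suc 0) + f 0)"
    using sums_Suc_iff[of f "c * closed_form Q w T + f (Suc 0)"] by simp
  moreover have "c * closed_form Q w T + f (Suc 0) + f 0 = 1 / Q + w / Q ^ 2 + (w ^ 2 / Q) * closed_form Q w T"
  proof -
    have z': "z = w * Q"
      unfolding w_def using den(1) by simp
    have "f 0 = 1 / Q"
      unfolding f_def x(1) Q_def by simp
    moreover have "f (Suc 0) = w / Q ^ 2"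
      unfolding f_def One_nat_def[symmetric] x(2) Q_def w_def using q
      by (simp add: field_simps power2_eq_square power3_eq_cube)
    moreover have "c = w ^ 2 / Q"
      unfolding c_def z' using den(1) by (simp add: field_simps power2_eq_square power3_eq_cube)
    ultimately show ?thesis
      by (simp add: algebra_simps)
  qed
  ultimately show ?thesis
    using closed_form_Suc[OF den(1,4)] unfolding f_def Q_def w_def by simp
qed

lemma all_less_3: "(\<forall>i<3::nat. P i) \<longleftrightarrow> P 0 \<and> P 1 \<and> P 2"
  by (auto simp: numeral_3_eq_3 numeral_2_eq_2 less_Suc_eq)

context dyadic_field
begin

lemma equiv_vec_cong: "equiv (vecs val n) (vec_cong val n m)"
proof (rule equivI)
  show "sym (vec_cong val n m)"
    unfolding sym_def vec_cong_def using ideal_sym by blast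
  show "trans (vec_cong val n m)"
    unfolding trans_def vec_cong_def using ideal_trans by blast
qed (auto simp: refl_on_def vec_cong_def)

definition vec3 :: "'k \<Rightarrow> 'k \<Rightarrow> 'k \<Rightarrow> nat \<Rightarrow> 'k" where
  "vec3 a b c = (\<lambda>i. if i = 0 then a else if i = 1 then b else if i = 2 then c else 0)"

lemma vec3_simps [simp]: "vec3 a b c 0 = a" "vec3 a b c 1 = b" "vec3 a b c 2 = c"
  "vec3 a b c (Suc 0) = b" "vec3 a b c (Suc (Suc 0)) = c"
  by (simp_all add: vec3_def)

lemma mem_vecs_3: "x \<in> vecs val 3 \<longleftrightarrow> x 0 \<in> \<O> \<and> x 1 \<in> \<O> \<and> x 2 \<in> \<O> \<and> (\<forall>i\<ge>3. x i = 0)"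
  by (simp add: vecs_def all_less_3)

lemma vec_cong_3: "(x, y) \<in> vec_cong val 3 m \<longleftrightarrow> x \<in> vecs val 3 \<and> y \<in> vecs val 3 \<and>
    cong3 m (x 0, x 1, x 2) (y 0, y 1, y 2)"
  by (simp add: vec_cong_def all_less_3)

lemma vec3_in_vecs: "a \<in> \<O> \<Longrightarrow> b \<in> \<O> \<Longrightarrow> c \<in> \<O> \<Longrightarrow> vec3 a b c \<in> vecs val 3"
  by (simp add: mem_vecs_3 vec3_def)

lemma vecs_3_eqI:
  assumes "x \<in> vecs val 3" "y \<in> vecs val 3" "(x 0, x 1, x 2) = (y 0, y 1, y 2)"
  shows "x = y"
proof
  fix i :: nat
  consider "i = 0" | "i = 1" | "i = 2" | "3 \<le> i"
    by linarith
  then show "x i = y i"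
    using assms unfolding mem_vecs_3 by cases auto
qed

lemma card_quotient_vecs_3:
  assumes P: "invariant_mod m P"
  shows "card ({x \<in> vecs val 3. P (x 0, x 1, x 2)} // vec_cong val 3 m) = count_mod m P"
proof -
  let ?D = "{x \<in> vecs val 3. (x 0, x 1, x 2) \<in> cube (reps m)}"
  let ?S = "{x \<in> vecs val 3. P (x 0, x 1, x 2)}"
  have "card (?S // vec_cong val 3 m) = card (?S \<inter> ?D)"
  proof (rule card_quotient_transversal[OF equiv_vec_cong])
    show "\<exists>d\<in>?D. (x, d) \<in> vec_cong val 3 m" if x: "x \<in> vecs val 3" for x
    proof -
      obtain a b c where "a \<in> reps m" "x 0 - a \<in> \<I> m" "b \<in> reps m" "x 1 - b \<in> \<I> m"
        "c \<in> reps m" "x 2 - c \<in> \<I> m"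
        using x residue_systemD(2)[OF residue_system_reps] by (metis mem_vecs_3)
      moreover from this have "vec3 a b c \<in> vecs val 3"
        using reps_subset_vring by (intro vec3_in_vecs) auto
      ultimately show ?thesis
        using x by (intro bexI[of _ "vec3 a b c"]) (auto simp: vec_cong_3)
    qed
    show "d = d'" if "d \<in> ?D" "d' \<in> ?D" "(d, d') \<in> vec_cong val 3 m" for d d'
      using that residue_systemD(3)[OF residue_system_reps] vecs_3_eqI[of d d']
      by (auto simp: vec_cong_3)
    show "y \<in> ?S" if "x \<in> ?S" "(x, y) \<in> vec_cong val 3 m" for x y
      using that invariant_modD[OF P, of "(x 0, x 1, x 2)" "(y 0, y 1, y 2)"]
      by (auto simp: vec_cong_3 mem_vecs_3)
  qed auto
  also have "card (?S \<inter> ?D) = count_mod m P"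
    unfolding count_mod_def
  proof (rule bij_betw_same_card[of "\<lambda>x. (x 0, x 1, x 2)"], rule bij_betwI')
    show "(x 0, x 1, x 2) = (y 0, y 1, y 2) \<longleftrightarrow> x = y" if "x \<in> ?S \<inter> ?D" "y \<in> ?S \<inter> ?D" for x y
      using that vecs_3_eqI by auto
    show "\<exists>x\<in>?S \<inter> ?D. t = (x 0, x 1, x 2)" if t: "t \<in> {t \<in> cube (reps m). P t}" for t
    proof -
      obtain a b c where "t = (a, b, c)" "a \<in> reps m" "b \<in> reps m" "c \<in> reps m" "P (a, b, c)"
        using t by (cases t) auto
      moreover from this have "vec3 a b c \<in> vecs val 3"
        using reps_subset_vring by (intro vec3_in_vecs) auto
      ultimately show ?thesis
        by (intro bexI[of _ "vec3 a b c"]) auto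
    qed
  qed auto
  finally show ?thesis .
qed

lemma card_quotient_vecs_3_all: "card (vecs val 3 // vec_cong val 3 m) = q ^ (3 * m)"
  using card_quotient_vecs_3[of m "\<lambda>_. True"] card_cube_reps[of m]
  by (simp add: invariant_mod_def count_mod_def)

end

context dyadic_form
begin

lemma X_l_eq_count_mod:
  "X_l val 3 (\<lambda>x. B (x 0, x 1, x 2)) \<rho> l
     = real (count_mod (Suc l) (\<lambda>x. B x - \<rho> \<in> \<I> (Suc l))) / real q ^ (3 * Suc l)"
  unfolding X_l_def coset_measure_def Suc_eq_plus1[symmetric]
  using card_quotient_vecs_3[OF invariant_mod_ternary[OF u_in_vring v_in_vring]] card_quotient_vecs_3_all
  by simp

lemma X_l_0:
  assumes "t \<in> \<O>"
  shows "X_l val 3 (\<lambda>x. B (x 0, x 1, x 2)) (t ^ 2) 0 = 1 / real q"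
  unfolding X_l_eq_count_mod using count_mod_1[of "t ^ 2"] assms two_le_q
  by (simp add: power_numeral_reduce)

lemma X_l_unit:
  assumes "is_unit_v val t"
  shows "X_l val 3 (\<lambda>x. B (x 0, x 1, x 2)) (t ^ 2) (Suc l) = (real q + 1) / real q ^ (l + 3)"
proof -
  have "3 * Suc (Suc l) = (3 + 2 * l) + (l + 3)"
    by simp
  then have "real q ^ (3 * Suc (Suc l)) = (real q ^ 3 * real q ^ (2 * l)) * real q ^ (l + 3)"
    by (simp only: power_add)
  then show ?thesis
    unfolding X_l_eq_count_mod using count_mod_unit_square[OF assms, of "Suc (Suc l)"] count_mod_one[of l] two_le_q
    by (simp add: field_simps)
qed

lemma X_l_two_mult_1:
  assumes "t \<in> \<O>"
  shows "X_l val 3 (\<lambda>x. B (x 0, x 1, x 2)) ((2 * t) ^ 2) 1 = 1 / real q ^ 3"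
proof -
  have "(2 * t) ^ 2 \<in> \<I> 2"
    using four_mult_in_ideal[of "t ^ 2"] assms by (simp add: power_mult_distrib)
  then show ?thesis
    unfolding X_l_eq_count_mod using count_mod_2_of_ideal_2 two_le_q
    by (simp add: numeral_2_eq_2 field_simps flip: power_add)
qed

lemma X_l_two_mult_Suc_Suc:
  assumes "t \<in> \<O>"
  shows "X_l val 3 (\<lambda>x. B (x 0, x 1, x 2)) ((2 * t) ^ 2) (Suc (Suc l))
    = X_l val 3 (\<lambda>x. B (x 0, x 1, x 2)) (t ^ 2) l / real q ^ 3"
  unfolding X_l_eq_count_mod using count_mod_four_mult[of "t ^ 2" l] assms two_le_q
  by (simp add: power_mult_distrib field_simps flip: power_add)

lemma X_l_series:
  assumes "t \<in> \<O>" "t \<noteq> 0" "val t = int T" and z: "norm z < 1"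
  shows "(\<lambda>l. z ^ l * complex_of_real (X_l val 3 (\<lambda>x. B (x 0, x 1, x 2)) (t ^ 2) l))
    sums closed_form (of_real (real q)) (z / of_real (real q)) T"
  using assms(1-3)
proof (induction T arbitrary: t)
  case 0
  then have "is_unit_v val t"
    by (simp add: is_unit_v_def)
  then show ?case
    using sums_closed_form_0[OF two_le_q z] X_l_0 X_l_unit 0 by simp
next
  case (Suc T)
  then have "t \<in> \<I> 1"
    by (simp add: mem_ideal_iff)
  then obtain t' where t': "t' \<in> \<O>" "t = 2 * t'"
    using mem_ideal_two_power_iff[of t 1] by auto
  with Suc.prems have "t' \<noteq> 0" "val t' = int T"
    using val_mult[of 2 t'] two_neq_zero val_two by auto
  then have "(\<lambda>l. z ^ l * complex_of_real (X_l val 3 (\<lambda>x. B (x 0, x 1, x 2)) (t' ^ 2) l))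
      sums closed_form (of_real (real q)) (z / of_real (real q)) T"
    using Suc.IH t'(1) by blast
  then show ?case
    unfolding t'(2)
    by (rule sums_closed_form_Suc[OF two_le_q z])
      (use t'(1) X_l_0[of "2 * t'"] X_l_two_mult_1 X_l_two_mult_Suc_Suc in simp_all)
qed

end

context dyadic_field
begin

lemma anisotropic_if_hilbert_symbol:
  assumes hilbert: "hilbert_symbol a \<Delta> = -1" and a: "a = 1 + 2 * u" "a \<noteq> 0"
    and v: "- a * \<Delta> = 1 + 2 * v"
  shows "anisotropic u v"
  unfolding anisotropic_def
proof (intro allI impI)
  fix x0 x1 x2 assume zero: "ternary u v (x0, x1, x2) = 0"
  have eq: "ternary u v (x0, x1, x2) = x0 ^ 2 - a * x1 ^ 2 - (- a * \<Delta>) * x2 ^ 2"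
    by (simp only: ternary_simp a(1)[symmetric] v[symmetric])
  have "x0 ^ 2 - a * x1 ^ 2 - (- a * \<Delta>) * x2 ^ 2 = 0"
    using zero unfolding eq .
  then have "a * (x0 ^ 2 - a * x1 ^ 2 - (- a * \<Delta>) * x2 ^ 2) = 0"
    by (simp only: mult_zero_right)
  then have square: "(a * x1) ^ 2 = a * x0 ^ 2 + \<Delta> * (a * x2) ^ 2"
    by (simp add: algebra_simps power2_eq_square)
  have "(x0, a * x2, a * x1) = (0, 0, 0)"
  proof (rule ccontr)
    assume "(x0, a * x2, a * x1) \<noteq> (0, 0, 0)"
    with square have "\<exists>x y z. (x, y, z) \<noteq> (0, 0, 0) \<and> z ^ 2 = a * x ^ 2 + \<Delta> * y ^ 2"
      by blast
    then have "hilbert_symbol a \<Delta> = 1"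
      unfolding hilbert_symbol_def by simp
    then show False
      using hilbert by simp
  qed
  then show "x0 = 0 \<and> x1 = 0 \<and> x2 = 0"
    using a(2) by simp
qed

lemma ternary_eq_diagonal_form:
  assumes a: "a = 1 + 2 * u" and v: "- a * \<Delta> = 1 + 2 * v"
  shows "(\<lambda>x::nat \<Rightarrow> 'k. x 0 ^ 2 - a * (x 1 ^ 2 - \<Delta> * x 2 ^ 2)) = (\<lambda>x. ternary u v (x 0, x 1, x 2))"
proof
  fix x :: "nat \<Rightarrow> 'k"
  have "x 0 ^ 2 - a * (x 1 ^ 2 - \<Delta> * x 2 ^ 2) = x 0 ^ 2 - a * x 1 ^ 2 - (- a * \<Delta>) * x 2 ^ 2"
    by (simp add: algebra_simps)
  also have "\<dots> = ternary u v (x 0, x 1, x 2)"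
    by (simp only: ternary_simp a[symmetric] v[symmetric])
  finally show "x 0 ^ 2 - a * (x 1 ^ 2 - \<Delta> * x 2 ^ 2) = ternary u v (x 0, x 1, x 2)" .
qed

end

lemma norm_powr_minus_less_one:
  assumes "1 < r" "0 < Re \<beta>"
  shows "norm (complex_of_real r powr (- \<beta>)) < 1"
proof -
  have "norm (complex_of_real r powr (- \<beta>)) = r powr (- Re \<beta>)"
    using assms(1) by (subst norm_powr_real_powr) auto
  also have "\<dots> < 1"
    using assms by (intro powr_less_one) auto
  finally show ?thesis .
qed

theorem proposition7p2:
  fixes val :: "'k::field \<Rightarrow> int" and q :: nat
    and a \<Delta> u v t :: 'k and T :: nat and \<beta> :: complex
  assumes "unram_dyadic_local_field val q"
    and "is_unit_v val u" and "is_unit_v val v" and "is_unit_v val \<Delta>"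
    and "a = 1 + 2 * u"
    and "quad_defect val a = two_pow_ideal val 1"
    and "quad_defect val \<Delta> = two_pow_ideal val 1"
    and "hilbert_symbol a \<Delta> = -1"
    and "- a * \<Delta> = 1 + 2 * v"
    and "t \<in> vring val" and "t \<noteq> 0" and "val t = int T"
    and "0 < Re \<beta>"
  shows
    "let B = (\<lambda>x::nat \<Rightarrow> 'k. x 0 ^ 2 - a * (x 1 ^ 2 - \<Delta> * x 2 ^ 2));
         Q = complex_of_real (real q);
         z = Q powr (- \<beta>);
         w = z / Q
     in (\<lambda>l. z ^ l * complex_of_real (X_l val 3 B (t ^ 2) l)) sums
          ((1 / Q) * (1 + w / Q) / (1 - w ^ 2 / Q)
           + (1 / Q) * w ^ (2 * T + 1) * (1 / Q) ^ T * (1 - w ^ 2 / Q ^ 2)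
               / ((1 - w) * (1 - w ^ 2 / Q)))"
proof -
  interpret dyadic_field val q
    by (rule dyadic_field.intro) fact
  have "a \<noteq> 0"
    using is_unit_v_one_plus_two[OF is_unit_v_in_vring[OF \<open>is_unit_v val u\<close>]] \<open>a = 1 + 2 * u\<close>
    by (simp add: is_unit_v_def)
  then interpret dyadic_form val q u v
    using assms anisotropic_if_hilbert_symbol by unfold_locales auto
  have "norm (complex_of_real (real q) powr (- \<beta>)) < 1"
    using two_le_q \<open>0 < Re \<beta>\<close> by (intro norm_powr_minus_less_one) auto
  then show ?thesis
    unfolding Let_def ternary_eq_diagonal_form[OF \<open>a = 1 + 2 * u\<close> \<open>- a * \<Delta> = 1 + 2 * v\<close>]
      closed_form_def[symmetric]
    using X_l_series[OF assms(10-12)] by blast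
qed

end
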